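(* Assume (H0), (H1), (H2) hold, $\kappa>0$, and $g'(1)(\mu+\beta)-\beta\rho\neq0$. For $n\in\mathbb{N}$ with $C_n(G)\neq0$ define $$\widehat\alpha_n=\frac{-(\rho+\mu+\beta)^2}{\kappa[g'(1)(\mu+\beta)-\beta\rho]\,C_n(G)}\left(d-\frac{f'(1)}{l_n}\right),$$ and $\widehat\Sigma^+=\{n:\widehat\alpha_n>0\}$, $\widehat\Sigma^-=\{n:\widehat\alpha_n<0\}$, $\widehat\alpha_r=\min_{n\in\widehat\Sigma^+}\widehat\alpha_n$, $\widehat\alpha_l=\max_{n\in\widehat\Sigma^-}\widehat\alpha_n$ (with $\min\emptyset=+\infty$, $\max\emptyset=-\infty$). Then for system (1.8b): (i) the constant steady state $\widehat U_*=(1,\rho\kappa/(\rho+\mu+\beta))$ is locally asymptotically stable if $\widehat\alpha_l<\alpha<\widehat\alpha_r$; (ii) $\widehat U_*$ is unstable if $\alpha<\widehat\alpha_l$ or $\alpha>\widehat\alpha_r$.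
   Context: $L>0$, $d>0$, $\alpha\in\mathbb{R}$, $\mu,\beta\ge0$. Convolution $(G*z)(x)=\frac{1}{2L}\int_{-L}^{L}G(x-y)z(y)\,dy$, $\overline{k}=G*k$. (H0): $G\ge0$, $G\in L^1_{per}(-L,L)$, $G$ even, $(2L)^{-1}\int_{-L}^LG=1$. (H1): $f\in C^3([0,\infty))$, $f(0)=f(1)=0$, $f'(0)>0$, $f'(1)<0$, $f>0$ on $(0,1)$, $f<0$ on $(1,\infty)$. (H2): $g\in C^3([0,\infty))$, $g>0$ on $(0,\infty)$, $g(0)=0$, $g(1)=\rho>0$. $l_n=n^2\pi^2/L^2$; $C_n(G)=\frac{1}{2L}\int_{-L}^{L}\cos(n\pi y/L)G(y)\,dy$. System (1.8b): $u_t=du_{xx}+\alpha(u\overline{k}_x)_x+f(u)$, $k_t=g(u)(\kappa-k)-(\mu+\beta u)k$ on $(-L,L)$ with periodic boundary conditions. Stability/instability is that determined by the linearization at $\widehat U_*$ on $H^2_{per}\times L^2_{per}$. *)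

theory Defs
  imports "HOL-Analysis.Analysis"
begin

definition C3_on :: "real set \<Rightarrow> (real \<Rightarrow> real) \<Rightarrow> bool" where
  "C3_on S h \<longleftrightarrow> (\<exists>h1 h2 h3.
     (\<forall>x\<in>S. (h has_real_derivative h1 x) (at x within S)) \<and>
     (\<forall>x\<in>S. (h1 has_real_derivative h2 x) (at x within S)) \<and>
     (\<forall>x\<in>S. (h2 has_real_derivative h3 x) (at x within S)) \<and>
     continuous_on S h3)"

definition H0 :: "real \<Rightarrow> (real \<Rightarrow> real) \<Rightarrow> bool" where
  "H0 L G \<longleftrightarrow> (\<forall>x. G x \<ge> 0) \<and> (\<forall>x. G (x + 2*L) = G x) \<and>
     G integrable_on {-L..L} \<and> (\<forall>x. G (-x) = G x) \<and>
     integral {-L..L} G / (2*L) = 1"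

definition H1 :: "(real \<Rightarrow> real) \<Rightarrow> bool" where
  "H1 f \<longleftrightarrow> C3_on {0..} f \<and> f 0 = 0 \<and> f 1 = 0 \<and> deriv f 0 > 0 \<and> deriv f 1 < 0 \<and>
     (\<forall>x. 0 < x \<and> x < 1 \<longrightarrow> f x > 0) \<and> (\<forall>x. x > 1 \<longrightarrow> f x < 0)"

definition H2 :: "(real \<Rightarrow> real) \<Rightarrow> real \<Rightarrow> bool" where
  "H2 g \<rho> \<longleftrightarrow> C3_on {0..} g \<and> (\<forall>x. x > 0 \<longrightarrow> g x > 0) \<and> g 0 = 0 \<and> g 1 = \<rho> \<and> \<rho> > 0"

definition conv :: "real \<Rightarrow> (real \<Rightarrow> real) \<Rightarrow> (real \<Rightarrow> complex) \<Rightarrow> real \<Rightarrow> complex" where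
  "conv L G z x = integral {-L..L} (\<lambda>y. complex_of_real (G (x - y)) * z y) / complex_of_real (2*L)"

definition lam :: "real \<Rightarrow> nat \<Rightarrow> real" where
  "lam L n = (real n)^2 * pi^2 / L^2"

definition Cn :: "real \<Rightarrow> (real \<Rightarrow> real) \<Rightarrow> nat \<Rightarrow> real" where
  "Cn L G n = integral {-L..L} (\<lambda>y. cos (real n * pi * y / L) * G y) / (2*L)"

definition periodic :: "real \<Rightarrow> (real \<Rightarrow> 'a) \<Rightarrow> bool" where
  "periodic L z \<longleftrightarrow> (\<forall>x. z (x + 2*L) = z x)"

definition kstar :: "real \<Rightarrow> real \<Rightarrow> real \<Rightarrow> real \<Rightarrow> real" where
  "kstar \<rho> \<kappa> \<mu> \<beta> = \<rho> * \<kappa> / (\<rho> + \<mu> + \<beta>)"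

text \<open>Eigenvalues of the linearization of (1.8b) at (1, k*):
  (U,K) \<mapsto> ( d U'' + \<alpha> (G*K)'' + f'(1) U ,
             [g'(1)(\<kappa> - k*) - \<beta> k*] U - (g(1) + \<mu> + \<beta>) K ),
  with 2L-periodic (smooth) eigenfunctions.\<close>
definition lin_eigenvalue ::
  "real \<Rightarrow> real \<Rightarrow> real \<Rightarrow> real \<Rightarrow> real \<Rightarrow> real \<Rightarrow> (real \<Rightarrow> real) \<Rightarrow> (real \<Rightarrow> real)
   \<Rightarrow> (real \<Rightarrow> real) \<Rightarrow> complex \<Rightarrow> bool" where
  "lin_eigenvalue L d \<alpha> \<mu> \<beta> \<kappa> G f g ev \<longleftrightarrow>
     (let ks = kstar (g 1) \<kappa> \<mu> \<beta> in
     (\<exists>\<phi> \<phi>1 \<phi>2 \<psi> Hc1 Hc2.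
        (\<phi> \<noteq> (\<lambda>_. 0) \<or> \<psi> \<noteq> (\<lambda>_. 0)) \<and> periodic L \<phi> \<and> periodic L \<psi> \<and>
        continuous_on UNIV \<psi> \<and>
        (\<forall>x. (\<phi> has_vector_derivative \<phi>1 x) (at x)) \<and>
        (\<forall>x. (\<phi>1 has_vector_derivative \<phi>2 x) (at x)) \<and>
        (\<forall>x. (conv L G \<psi> has_vector_derivative Hc1 x) (at x)) \<and>
        (\<forall>x. (Hc1 has_vector_derivative Hc2 x) (at x)) \<and>
        (\<forall>x. of_real d * \<phi>2 x + of_real \<alpha> * Hc2 x + of_real (deriv f 1) * \<phi> x = ev * \<phi> x) \<and>
        (\<forall>x. of_real (deriv g 1 * (\<kappa> - ks) - \<beta> * ks) * \<phi> x
               - of_real (g 1 + \<mu> + \<beta>) * \<psi> x = ev * \<psi> x)))"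

definition lin_stable where
  "lin_stable L d \<alpha> \<mu> \<beta> \<kappa> G f g \<longleftrightarrow>
     (\<exists>\<omega>>0. \<forall>ev. lin_eigenvalue L d \<alpha> \<mu> \<beta> \<kappa> G f g ev \<longrightarrow> Re ev \<le> -\<omega>)"

definition lin_unstable where
  "lin_unstable L d \<alpha> \<mu> \<beta> \<kappa> G f g \<longleftrightarrow>
     (\<exists>ev. lin_eigenvalue L d \<alpha> \<mu> \<beta> \<kappa> G f g ev \<and> Re ev > 0)"

definition alpha_hat where
  "alpha_hat L d \<mu> \<beta> \<kappa> \<rho> G f g n =
     (- ((\<rho> + \<mu> + \<beta>) ^ 2)) / (\<kappa> * (deriv g 1 * (\<mu> + \<beta>) - \<beta> * \<rho>) * Cn L G n)
       * (d - deriv f 1 / lam L n)"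

definition Sigma_plus where
  "Sigma_plus L d \<mu> \<beta> \<kappa> \<rho> G f g =
     {n::nat. n \<ge> 1 \<and> Cn L G n \<noteq> 0 \<and> alpha_hat L d \<mu> \<beta> \<kappa> \<rho> G f g n > 0}"

definition Sigma_minus where
  "Sigma_minus L d \<mu> \<beta> \<kappa> \<rho> G f g =
     {n::nat. n \<ge> 1 \<and> Cn L G n \<noteq> 0 \<and> alpha_hat L d \<mu> \<beta> \<kappa> \<rho> G f g n < 0}"

definition alpha_r :: "real \<Rightarrow> real \<Rightarrow> real \<Rightarrow> real \<Rightarrow> real \<Rightarrow> real \<Rightarrow> (real \<Rightarrow> real)
   \<Rightarrow> (real \<Rightarrow> real) \<Rightarrow> (real \<Rightarrow> real) \<Rightarrow> ereal" where
  "alpha_r L d \<mu> \<beta> \<kappa> \<rho> G f g =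
     (INF n\<in>Sigma_plus L d \<mu> \<beta> \<kappa> \<rho> G f g. ereal (alpha_hat L d \<mu> \<beta> \<kappa> \<rho> G f g n))"

definition alpha_l :: "real \<Rightarrow> real \<Rightarrow> real \<Rightarrow> real \<Rightarrow> real \<Rightarrow> real \<Rightarrow> (real \<Rightarrow> real)
   \<Rightarrow> (real \<Rightarrow> real) \<Rightarrow> (real \<Rightarrow> real) \<Rightarrow> ereal" where
  "alpha_l L d \<mu> \<beta> \<kappa> \<rho> G f g =
     (SUP n\<in>Sigma_minus L d \<mu> \<beta> \<kappa> \<rho> G f g. ereal (alpha_hat L d \<mu> \<beta> \<kappa> \<rho> G f g n))"

end

theory Submission
  imports Defs
begin

text \<open>The Fourier characters \<open>e\<^sub>k(x) = exp(i k \<pi> x / L)\<close> are eigenfunctions of the convolution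
  with \<open>G\<close>, with eigenvalue \<open>C\<^bsub>|k|\<^esub>(G)\<close> because \<open>G\<close> is even. Taking Fourier coefficients therefore
  decouples the linearisation at \<open>(1, k\<^sub>*)\<close> into \<open>2 \<times> 2\<close> matrices, one for each mode \<open>n\<close>; since
  trigonometric polynomials are dense (Stone-Weierstrass on the circle), a continuous periodic
  function is determined by its coefficients, and so the eigenvalues are exactly
  \<open>-(\<rho> + \<mu> + \<beta>)\<close> and the roots of the dispersion relations \<open>\<lambda>\<^sup>2 + T\<^sub>n \<lambda> + c\<^sub>n = 0\<close>, where \<open>T\<^sub>n > 0\<close>.
  A root with positive real part exists iff some \<open>c\<^sub>n < 0\<close>, and the spectrum stays uniformly in the
  left half plane when \<open>c\<^sub>n \<ge> \<epsilon> l\<^sub>n\<close>. For \<open>n \<ge> 1\<close>, \<open>c\<^sub>n / l\<^sub>n\<close> is affine in \<open>\<alpha>\<close> with root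
  \<open>\<alpha>\<^sub>n\<close>, so its sign is decided by the position of \<open>\<alpha>\<close> relative to \<open>\<alpha>\<^sub>l\<close> and \<open>\<alpha>\<^sub>r\<close>.\<close>

section \<open>Fourier characters and periodic integrals\<close>

definition fourier_freq :: "real \<Rightarrow> int \<Rightarrow> complex" where
  "fourier_freq L k = \<i> * complex_of_real (real_of_int k * pi / L)"

definition fourier_exp :: "real \<Rightarrow> int \<Rightarrow> real \<Rightarrow> complex" where
  "fourier_exp L k x = exp (x *\<^sub>R fourier_freq L k)"

lemma fourier_exp_mult: "fourier_exp L j x * fourier_exp L k x = fourier_exp L (j + k) x"
  unfolding fourier_exp_def fourier_freq_def
  by (simp add: exp_add[symmetric] scaleR_conv_of_real algebra_simps add_divide_distrib)

lemma fourier_exp_add: "fourier_exp L k (x + y) = fourier_exp L k x * fourier_exp L k y"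
  unfolding fourier_exp_def by (simp add: scaleR_add_left exp_add)

lemma fourier_exp_uminus_index: "fourier_exp L (-k) x = fourier_exp L k (-x)"
  unfolding fourier_exp_def fourier_freq_def by (simp add: scaleR_conv_of_real)

lemma cnj_fourier_exp: "cnj (fourier_exp L k x) = fourier_exp L (-k) x"
proof -
  have "cnj (x *\<^sub>R fourier_freq L k) = x *\<^sub>R fourier_freq L (-k)"
    unfolding fourier_freq_def by (simp add: scaleR_conv_of_real)
  then show ?thesis unfolding fourier_exp_def by (metis exp_cnj)
qed

lemma fourier_exp_0 [simp]: "fourier_exp L 0 x = 1"
  unfolding fourier_exp_def fourier_freq_def by simp

lemma norm_fourier_exp [simp]: "norm (fourier_exp L k x) = 1"
  unfolding fourier_exp_def fourier_freq_def by (simp add: scaleR_conv_of_real)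

lemma fourier_exp_nonzero [simp]: "fourier_exp L k x \<noteq> 0"
  unfolding fourier_exp_def by simp

lemma fourier_exp_cis: "fourier_exp L k x = cis (real_of_int k * pi * x / L)"
  unfolding fourier_exp_def fourier_freq_def cis_conv_exp
  by (simp add: scaleR_conv_of_real algebra_simps)

lemma periodic_fourier_exp:
  assumes "L \<noteq> 0"
  shows "periodic L (fourier_exp L k)"
proof -
  have "real_of_int k * pi * (2*L) / L = 2 * pi * real_of_int k"
    using assms by (simp add: field_simps)
  then have "fourier_exp L k (2*L) = 1"
    unfolding fourier_exp_cis by (simp add: cis_multiple_2pi)
  then show ?thesis unfolding periodic_def by (simp add: fourier_exp_add)
qed

lemma fourier_exp_has_vector_derivative:
  "(fourier_exp L k has_vector_derivative fourier_freq L k * fourier_exp L k x) (at x within S)"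
  unfolding fourier_exp_def
  using exp_scaleR_has_vector_derivative_right[of "fourier_freq L k" x S] by (simp add: mult.commute)

lemma continuous_on_fourier_exp [continuous_intros]: "continuous_on S (fourier_exp L k)"
  unfolding fourier_exp_def by (intro continuous_intros)

lemma fourier_freq_square:
  "fourier_freq L k * fourier_freq L k = - complex_of_real (lam L (nat \<bar>k\<bar>))"
  unfolding fourier_freq_def lam_def by (simp add: power2_eq_square algebra_simps)

lemma periodic_add_int_multiple:
  assumes "periodic L h"
  shows "h (x + real_of_int m * (2*L)) = h x"
proof (induction m rule: int_induct[where k = 0])
  case (step1 i)
  have "h (x + real_of_int (i + 1) * (2*L)) = h ((x + real_of_int i * (2*L)) + 2*L)"
    by (simp add: algebra_simps)
  also have "\<dots> = h x" using step1 assms unfolding periodic_def by simp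
  finally show ?case .
next
  case (step2 i)
  have "h x = h ((x + real_of_int (i - 1) * (2*L)) + 2*L)"
    using step2 by (simp add: algebra_simps)
  also have "\<dots> = h (x + real_of_int (i - 1) * (2*L))"
    using assms unfolding periodic_def by blast
  finally show ?case by simp
qed simp

lemma periodic_endpoints:
  assumes "periodic L h"
  shows "h L = h (-L)"
proof -
  have "h (-L + 2*L) = h (-L)" using assms unfolding periodic_def by blast
  then show ?thesis by simp
qed

lemma periodic_representative:
  assumes "L > 0"
  obtains t m where "t \<in> {-L..L}" "x = t + real_of_int m * (2*L)"
proof -
  define m where "m = \<lfloor>(x + L) / (2*L)\<rfloor>"
  have "real_of_int m \<le> (x + L) / (2*L)" "(x + L) / (2*L) < real_of_int m + 1"
    unfolding m_def by linarith+
  with assms have "real_of_int m * (2*L) \<le> x + L" "x + L < (real_of_int m + 1) * (2*L)"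
    by (simp_all add: field_simps)
  then have "x - real_of_int m * (2*L) \<in> {-L..L}" by (auto simp: algebra_simps)
  then show thesis using that[of "x - real_of_int m * (2*L)" m] by simp
qed

lemma periodic_vector_derivative:
  assumes "periodic L h" and h': "\<And>x. (h has_vector_derivative h' x) (at x)"
  shows "periodic L h'"
  unfolding periodic_def
proof
  fix x
  have "((\<lambda>x. x + 2*L) has_vector_derivative 1) (at x)"
    by (auto intro!: derivative_eq_intros)
  from vector_diff_chain_at[OF this h']
  have "((h \<circ> (\<lambda>x. x + 2*L)) has_vector_derivative h' (x + 2*L)) (at x)" by simp
  moreover have "h \<circ> (\<lambda>x. x + 2*L) = h" using assms(1) unfolding periodic_def by auto
  ultimately show "h' (x + 2*L) = h' x"
    using h'[of x] by (auto intro: vector_derivative_unique_at)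
qed

lemma has_integral_periodic_shift:
  fixes h :: "real \<Rightarrow> 'a::banach"
  assumes "L > 0" and per: "periodic L h" and int: "h integrable_on {-L..L}"
  shows "(h has_integral integral {-L..L} h) {a..a + 2*L}"
proof -
  let ?I = "integral {-L..L} h"
  have shift: "(h has_integral I) {s + c..t + c}"
    if "(h has_integral I) {s..t}" and "h \<circ> (+) c = h" for I s t c
    using that has_integral_shift_Icc_real[of h c I s t] by simp
  have base: "(h has_integral ?I) {t..t + 2*L}" if t: "t \<in> {-L..L}" for t
  proof -
    have "h \<circ> (+) (2*L) = h" using per unfolding periodic_def by (auto simp: add.commute)
    then have "(h has_integral integral {-L..t} h) {-L + 2*L..t + 2*L}"
      using t by (intro shift integrable_integral integrable_subinterval_real[OF int]) auto
    moreover have "(h has_integral integral {t..L} h) {t..L}"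
      using t by (intro integrable_integral integrable_subinterval_real[OF int]) auto
    ultimately have "(h has_integral (integral {t..L} h + integral {-L..t} h)) {t..t + 2*L}"
      using t by (intro has_integral_combine[of t L]) auto
    moreover have "integral {-L..t} h + integral {t..L} h = ?I"
      using t by (intro Henstock_Kurzweil_Integration.integral_combine int) auto
    ultimately show ?thesis by (simp add: add.commute)
  qed
  obtain t m where t: "t \<in> {-L..L}" and a: "a = t + real_of_int m * (2*L)"
    using periodic_representative[OF assms(1)] .
  have "h \<circ> (+) (real_of_int m * (2*L)) = h"
    using periodic_add_int_multiple[OF per] by (auto simp: add.commute)
  from shift[OF base[OF t] this] show ?thesis
    unfolding a by (simp only: add_ac)
qed

lemma has_integral_periodic_reflect:
  fixes h :: "real \<Rightarrow> 'a::banach"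
  assumes "L > 0" and "periodic L h" and "h integrable_on {-L..L}"
  shows "((\<lambda>y. h (x - y)) has_integral integral {-L..L} h) {-L..L}"
proof -
  let ?I = "integral {-L..L} h"
  have "(h has_integral ?I) {x - L..x + L}"
    using has_integral_periodic_shift[OF assms, of "x - L"] by (simp add: add.commute)
  then have "((\<lambda>u. h (-u)) has_integral ?I) {-(x + L)..-(x - L)}"
    using has_integral_reflect_real[of h ?I "x - L" "x + L"] by blast
  then have "((\<lambda>u. h (-u)) has_integral ?I) {-L - x..L - x}"
    by (simp add: algebra_simps)
  then show ?thesis
    using has_integral_shift_Icc_real[of "\<lambda>u. h (-u)" "-x" ?I "-L" L] by (simp add: o_def)
qed

lemma odd_integral_eq_0:
  fixes h :: "real \<Rightarrow> real"
  assumes odd: "\<And>s. h (-s) = - h s" and "h integrable_on {-L..L}"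
  shows "integral {-L..L} h = 0"
proof -
  have "(h has_integral integral {-L..L} h) {-L..L}"
    using assms(2) by (simp add: integrable_integral)
  then have "((\<lambda>s. h (-s)) has_integral integral {-L..L} h) {-L..L}"
    using has_integral_reflect_real[where f = h and a = "-L" and b = L] by simp
  then have "(h has_integral - integral {-L..L} h) {-L..L}"
    using odd has_integral_neg_iff by fastforce
  then have "integral {-L..L} h = - integral {-L..L} h" by (rule integral_unique)
  then show ?thesis by simp
qed

lemma H0D:
  assumes "H0 L G"
  shows "G x \<ge> 0" "periodic L G" "G integrable_on {-L..L}" "G (-x) = G x"
    "integral {-L..L} G = 2*L"
  using assms unfolding H0_def periodic_def by (auto simp: divide_eq_1_iff)

lemma has_integral_kernel_reflect:
  assumes "L > 0" "H0 L G"
  shows "((\<lambda>y. G (x - y)) has_integral 2*L) {-L..L}"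
  using has_integral_periodic_reflect[OF assms(1) H0D(2,3)[OF assms(2)]] H0D(5)[OF assms(2)]
  by simp

lemma absolutely_integrable_mult_continuous:
  fixes w :: "real \<Rightarrow> real" and h :: "real \<Rightarrow> complex"
  assumes "w absolutely_integrable_on {a..b}" and "continuous_on {a..b} h"
  shows "(\<lambda>y. complex_of_real (w y) * h y) absolutely_integrable_on {a..b}"
proof -
  have "bilinear (\<lambda>(z::complex) (r::real). complex_of_real r * z)"
    by (auto simp: bilinear_def linear_iff algebra_simps scaleR_conv_of_real)
  then have "(\<lambda>y. (\<lambda>(z::complex) (r::real). complex_of_real r * z) (h y) (w y))
      absolutely_integrable_on {a..b}"
  proof (rule absolutely_integrable_bounded_measurable_product[OF _ _ _ _ assms(1)])
    show "h \<in> borel_measurable (lebesgue_on {a..b})"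
      by (rule continuous_imp_measurable_on_sets_lebesgue[OF assms(2)]) simp
    show "bounded (h ` {a..b})"
      by (rule compact_imp_bounded, rule compact_continuous_image[OF assms(2)]) simp
  qed simp
  then show ?thesis by simp
qed

lemma integrable_kernel_mult_continuous:
  assumes "L > 0" "H0 L G" "continuous_on {-L..L} h"
  shows "(\<lambda>y. complex_of_real (G (x - y)) * h y) integrable_on {-L..L}"
proof -
  have "(\<lambda>y. G (x - y)) absolutely_integrable_on {-L..L}"
    using has_integral_kernel_reflect[OF assms(1,2)] H0D(1)[OF assms(2)]
    by (intro nonnegative_absolutely_integrable_1) auto
  from absolutely_integrable_mult_continuous[OF this assms(3)] show ?thesis
    by (rule set_lebesgue_integral_eq_integral(1))
qed

lemma conv_add:
  assumes "L > 0" "H0 L G" "continuous_on {-L..L} p" "continuous_on {-L..L} q"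
  shows "conv L G (\<lambda>x. p x + q x) x = conv L G p x + conv L G q x"
  using integrable_kernel_mult_continuous[OF assms(1,2,3)]
    integrable_kernel_mult_continuous[OF assms(1,2,4)]
  unfolding conv_def by (simp add: distrib_left integral_add add_divide_distrib)

lemma conv_diff:
  assumes "L > 0" "H0 L G" "continuous_on {-L..L} p" "continuous_on {-L..L} q"
  shows "conv L G (\<lambda>x. p x - q x) x = conv L G p x - conv L G q x"
  using integrable_kernel_mult_continuous[OF assms(1,2,3)]
    integrable_kernel_mult_continuous[OF assms(1,2,4)]
  unfolding conv_def by (simp add: right_diff_distrib integral_diff diff_divide_distrib)

lemma conv_mult_left: "conv L G (\<lambda>x. c * p x) x = c * conv L G p x"
  unfolding conv_def by (simp add: algebra_simps)

lemma norm_conv_le: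
  assumes "L > 0" "H0 L G" "continuous_on {-L..L} h"
    and bound: "\<And>x. x \<in> {-L..L} \<Longrightarrow> norm (h x) \<le> B"
  shows "norm (conv L G h x) \<le> B"
proof -
  have kernel: "((\<lambda>y. G (x - y) * B) has_integral 2*L*B) {-L..L}"
    using has_integral_mult_left[OF has_integral_kernel_reflect[OF assms(1,2)]] .
  have "norm (integral {-L..L} (\<lambda>y. complex_of_real (G (x - y)) * h y))
      \<le> integral {-L..L} (\<lambda>y. G (x - y) * B)"
    using kernel bound H0D(1)[OF assms(2)]
    by (intro integral_norm_bound_integral integrable_kernel_mult_continuous assms)
       (auto simp: norm_mult mult_left_mono)
  also have "\<dots> = 2*L*B" using kernel by (rule integral_unique)
  finally show ?thesis
    unfolding conv_def using assms(1) by (simp add: norm_divide field_simps)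
qed

lemma periodic_conv:
  assumes "H0 L G"
  shows "periodic L (conv L G h)"
proof -
  have "G (x + 2*L - y) = G (x - y)" for x y
    using H0D(2)[OF assms] unfolding periodic_def by (metis add_diff_eq diff_add_eq)
  then show ?thesis unfolding periodic_def conv_def by simp
qed

lemma integrable_kernel_fourier_exp:
  assumes "H0 L G"
  shows "(\<lambda>s. complex_of_real (G s) * fourier_exp L k s) integrable_on {-L..L}"
proof -
  have "G absolutely_integrable_on {-L..L}"
    using H0D[OF assms] by (intro nonnegative_absolutely_integrable_1) auto
  from absolutely_integrable_mult_continuous[OF this continuous_on_fourier_exp]
  show ?thesis by (rule set_lebesgue_integral_eq_integral(1))
qed

lemma integral_kernel_fourier_exp:
  assumes "L > 0" "H0 L G"
  shows "integral {-L..L} (\<lambda>s. complex_of_real (G s) * fourier_exp L (-j) s)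
           = complex_of_real (2*L * Cn L G (nat \<bar>j\<bar>))"
    (is "integral _ ?k = _")
proof -
  note int = integrable_kernel_fourier_exp[OF assms(2), of "-j"]
  have "cos (real_of_int j * pi * s / L) = cos (real (nat \<bar>j\<bar>) * pi * s / L)" for s
  proof (cases "j \<ge> 0")
    case False
    then have "real (nat \<bar>j\<bar>) * pi * s / L = - (real_of_int j * pi * s / L)" by simp
    then show ?thesis by (metis cos_minus)
  qed simp
  then have "Re \<circ> ?k = (\<lambda>s. cos (real (nat \<bar>j\<bar>) * pi * s / L) * G s)"
    by (simp add: fun_eq_iff fourier_exp_cis)
  then have "Re (integral {-L..L} ?k) = integral {-L..L} (\<lambda>s. cos (real (nat \<bar>j\<bar>) * pi * s / L) * G s)"
    using integral_linear[OF int bounded_linear_Re] by simp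
  then have re: "Re (integral {-L..L} ?k) = 2*L * Cn L G (nat \<bar>j\<bar>)"
    unfolding Cn_def using assms(1) by simp
  have "Im (integral {-L..L} ?k) = integral {-L..L} (Im \<circ> ?k)"
    using integral_linear[OF int bounded_linear_Im] by simp
  also have "\<dots> = 0"
    \<comment> \<open>the imaginary part is odd since \<open>G\<close> is even\<close>
    using H0D(4)[OF assms(2)]
    by (intro odd_integral_eq_0 integrable_linear[OF int bounded_linear_Im])
       (simp add: fourier_exp_cis)
  finally show ?thesis using re by (simp add: complex_eq_iff)
qed

lemma conv_fourier_exp:
  assumes "L > 0" "H0 L G"
  shows "conv L G (fourier_exp L j) x = complex_of_real (Cn L G (nat \<bar>j\<bar>)) * fourier_exp L j x"
proof -
  define k where "k s = complex_of_real (G s) * fourier_exp L (-j) s" for s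
  have int: "k integrable_on {-L..L}"
    unfolding k_def by (rule integrable_kernel_fourier_exp[OF assms(2)])
  have "periodic L k"
    using H0D(2)[OF assms(2)] periodic_fourier_exp[of L "-j"] assms(1)
    unfolding periodic_def k_def by simp
  note reflect = has_integral_periodic_reflect[OF assms(1) this int, of x]
  have "complex_of_real (G (x - y)) * fourier_exp L j y = fourier_exp L j x * k (x - y)" for y
    using fourier_exp_add[of L j x "y - x"] fourier_exp_uminus_index[of L j "x - y"]
    unfolding k_def by simp
  then have "conv L G (fourier_exp L j) x
      = fourier_exp L j x * integral {-L..L} k / complex_of_real (2*L)"
    unfolding conv_def using integral_unique[OF reflect] by simp
  also have "\<dots> = complex_of_real (Cn L G (nat \<bar>j\<bar>)) * fourier_exp L j x"
    using integral_kernel_fourier_exp[OF assms, of j] assms(1)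
    unfolding k_def[symmetric] by (simp add: field_simps)
  finally show ?thesis .
qed

section \<open>Fourier coefficients\<close>

definition fourier_coeff :: "real \<Rightarrow> (real \<Rightarrow> complex) \<Rightarrow> int \<Rightarrow> complex" where
  "fourier_coeff L h k = integral {-L..L} (\<lambda>x. h x * fourier_exp L (-k) x)"

lemma has_integral_fourier_exp:
  assumes "L > 0"
  shows "(fourier_exp L m has_integral (if m = 0 then complex_of_real (2*L) else 0)) {-L..L}"
proof (cases "m = 0")
  case True
  then have "fourier_exp L m = (\<lambda>x. 1)" by (simp add: fun_eq_iff)
  then show ?thesis
    using assms True has_integral_const_real[of "1::complex" "-L" L] by (simp add: scaleR_conv_of_real)
next
  case False
  then have freq: "fourier_freq L m \<noteq> 0" using assms unfolding fourier_freq_def by simp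
  have "((\<lambda>x. fourier_exp L m x / fourier_freq L m) has_vector_derivative fourier_exp L m x)
          (at x within {-L..L})" for x
    using fourier_exp_has_vector_derivative[of L m x "{-L..L}"] freq
    by (auto intro!: derivative_eq_intros simp: field_simps)
  then have "(fourier_exp L m has_integral
      (fourier_exp L m L / fourier_freq L m - fourier_exp L m (-L) / fourier_freq L m)) {-L..L}"
    using assms by (intro fundamental_theorem_of_calculus) auto
  moreover have "fourier_exp L m L = fourier_exp L m (-L)"
    using assms by (intro periodic_endpoints periodic_fourier_exp) simp
  ultimately show ?thesis using False by (simp add: algebra_simps)
qed

lemma fourier_coeff_fourier_exp:
  assumes "L > 0"
  shows "fourier_coeff L (fourier_exp L j) k = (if j = k then complex_of_real (2*L) else 0)"
  using integral_unique[OF has_integral_fourier_exp[OF assms, of "j - k"]]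
  unfolding fourier_coeff_def by (simp add: fourier_exp_mult)

lemma fourier_coeff_add:
  assumes "continuous_on {-L..L} p" "continuous_on {-L..L} q"
  shows "fourier_coeff L (\<lambda>x. p x + q x) k = fourier_coeff L p k + fourier_coeff L q k"
  unfolding fourier_coeff_def distrib_right
  using assms by (intro integral_add integrable_continuous_real continuous_intros)

lemma fourier_coeff_diff:
  assumes "continuous_on {-L..L} p" "continuous_on {-L..L} q"
  shows "fourier_coeff L (\<lambda>x. p x - q x) k = fourier_coeff L p k - fourier_coeff L q k"
  unfolding fourier_coeff_def left_diff_distrib
  using assms by (intro integral_diff integrable_continuous_real continuous_intros)

lemma fourier_coeff_mult_left: "fourier_coeff L (\<lambda>x. c * p x) k = c * fourier_coeff L p k"
  unfolding fourier_coeff_def by (simp add: mult.assoc)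

lemma norm_fourier_coeff_le:
  assumes "L > 0" "continuous_on {-L..L} h" "\<And>x. x \<in> {-L..L} \<Longrightarrow> norm (h x) \<le> B"
  shows "norm (fourier_coeff L h k) \<le> B * (2*L)"
proof -
  have "norm (fourier_coeff L h k) \<le> B * (L - (-L))"
    unfolding fourier_coeff_def using assms
    by (intro integral_bound) (auto intro!: continuous_intros simp: norm_mult)
  then show ?thesis by simp
qed

text \<open>Integration by parts; the boundary terms cancel by periodicity.\<close>
lemma has_integral_fourier_coeff_deriv:
  assumes "L > 0" and per: "periodic L h" and h': "\<And>x. (h has_vector_derivative h' x) (at x)"
  shows "((\<lambda>x. h' x * fourier_exp L (-k) x) has_integral fourier_freq L k * fourier_coeff L h k) {-L..L}"
proof -
  define e where "e = fourier_exp L (-k)"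
  define w where "w = fourier_freq L (-k)"
  have cont: "continuous_on {-L..L} h"
    by (rule continuous_on_vector_derivative) (rule has_vector_derivative_at_within[OF h'])
  have "((\<lambda>x. h x * e x) has_vector_derivative (h' x * e x + h x * (w * e x))) (at x within {-L..L})" for x
    using has_vector_derivative_mult[OF has_vector_derivative_at_within[OF h'[of x]]
        fourier_exp_has_vector_derivative[of L "-k" x "{-L..L}"]]
    unfolding e_def w_def by (simp add: algebra_simps)
  then have "((\<lambda>x. h' x * e x + h x * (w * e x)) has_integral (h L * e L - h (-L) * e (-L))) {-L..L}"
    using assms(1) by (intro fundamental_theorem_of_calculus) auto
  moreover have "h L = h (-L)" "e L = e (-L)"
    using per assms(1) unfolding e_def by (auto intro: periodic_endpoints periodic_fourier_exp)
  ultimately have parts: "((\<lambda>x. h' x * e x + h x * (w * e x)) has_integral 0) {-L..L}" by simp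
  have "(\<lambda>x. h x * e x) integrable_on {-L..L}"
    unfolding e_def by (intro integrable_continuous_real continuous_on_mult cont continuous_on_fourier_exp)
  from has_integral_mult_right[OF integrable_integral[OF this], of w]
  have "((\<lambda>x. h x * (w * e x)) has_integral w * fourier_coeff L h k) {-L..L}"
    unfolding fourier_coeff_def e_def by (simp add: algebra_simps)
  from has_integral_diff[OF parts this]
  have "((\<lambda>x. h' x * e x) has_integral 0 - w * fourier_coeff L h k) {-L..L}" by simp
  then show ?thesis unfolding e_def w_def fourier_freq_def by simp
qed

lemma has_integral_fourier_coeff_second_deriv:
  assumes "L > 0" and "periodic L h"
    and h': "\<And>x. (h has_vector_derivative h' x) (at x)"
    and h'': "\<And>x. (h' has_vector_derivative h'' x) (at x)"
  shows "((\<lambda>x. h'' x * fourier_exp L (-k) x) has_integral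
           - complex_of_real (lam L (nat \<bar>k\<bar>)) * fourier_coeff L h k) {-L..L}"
proof -
  have "periodic L h'" using assms(2) h' by (rule periodic_vector_derivative)
  note second = has_integral_fourier_coeff_deriv[OF assms(1) this h'', of k]
  have "fourier_coeff L h' k = fourier_freq L k * fourier_coeff L h k"
    unfolding fourier_coeff_def[of L h']
    by (rule integral_unique[OF has_integral_fourier_coeff_deriv[OF assms(1,2) h']])
  with second show ?thesis by (simp add: mult.assoc[symmetric] fourier_freq_square)
qed

inductive_set trig_poly :: "real \<Rightarrow> (real \<Rightarrow> complex) set" for L where
  zero: "(\<lambda>x. 0) \<in> trig_poly L"
| add_term: "p \<in> trig_poly L \<Longrightarrow> (\<lambda>x. p x + c * fourier_exp L k x) \<in> trig_poly L"

lemma trig_poly_fourier_exp: "(\<lambda>x. c * fourier_exp L k x) \<in> trig_poly L"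
  using trig_poly.add_term[OF trig_poly.zero, where c = c and k = k] by simp

lemma trig_poly_const: "(\<lambda>x. c) \<in> trig_poly L"
  using trig_poly_fourier_exp[of c L 0] by simp

lemma trig_poly_add:
  assumes "p \<in> trig_poly L" "q \<in> trig_poly L"
  shows "(\<lambda>x. p x + q x) \<in> trig_poly L"
  using assms(2)
proof (induction q rule: trig_poly.induct)
  case (add_term q c k)
  then have "(\<lambda>x. (p x + q x) + c * fourier_exp L k x) \<in> trig_poly L"
    by (intro trig_poly.add_term)
  then show ?case by (simp add: add.assoc)
qed (use assms(1) in simp)

lemma trig_poly_mult_left: "p \<in> trig_poly L \<Longrightarrow> (\<lambda>x. a * p x) \<in> trig_poly L"
proof (induction p rule: trig_poly.induct)
  case (add_term q c k)
  then have "(\<lambda>x. a * q x + (a * c) * fourier_exp L k x) \<in> trig_poly L"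
    by (intro trig_poly.add_term)
  then show ?case by (simp add: algebra_simps)
qed (simp add: trig_poly.zero)

lemma trig_poly_mult_fourier_exp:
  "p \<in> trig_poly L \<Longrightarrow> (\<lambda>x. p x * fourier_exp L k x) \<in> trig_poly L"
proof (induction p rule: trig_poly.induct)
  case (add_term q c j)
  then have "(\<lambda>x. q x * fourier_exp L k x + c * fourier_exp L (j + k) x) \<in> trig_poly L"
    by (intro trig_poly.add_term)
  then show ?case by (simp add: algebra_simps fourier_exp_mult[symmetric])
qed (simp add: trig_poly.zero)

lemma trig_poly_mult:
  assumes "p \<in> trig_poly L" "q \<in> trig_poly L"
  shows "(\<lambda>x. p x * q x) \<in> trig_poly L"
  using assms(2)
proof (induction q rule: trig_poly.induct)
  case (add_term q c k)
  have "(\<lambda>x. p x * q x + c * (p x * fourier_exp L k x)) \<in> trig_poly L"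
    using add_term trig_poly_mult_left[OF trig_poly_mult_fourier_exp[OF assms(1)]]
    by (intro trig_poly_add) auto
  then show ?case by (simp add: algebra_simps)
qed (simp add: trig_poly.zero)

lemma continuous_on_trig_poly: "p \<in> trig_poly L \<Longrightarrow> continuous_on S p"
  by (induction p rule: trig_poly.induct) (auto intro!: continuous_intros)

lemma trig_poly_real_polynomial_function:
  assumes "real_polynomial_function r"
  shows "(\<lambda>x. complex_of_real (r (fourier_exp L 1 x))) \<in> trig_poly L"
  using assms
proof (induction r rule: real_polynomial_function.induct)
  case (linear r)
  interpret bounded_linear r by fact
  have Re_eq: "complex_of_real (Re z) = (1/2) * z + (1/2) * cnj z"
    and Im_eq: "complex_of_real (Im z) = (-\<i>/2) * z + (\<i>/2) * cnj z" for z
    by (simp_all add: complex_eq_iff)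
  have Re: "(\<lambda>x. complex_of_real (Re (fourier_exp L 1 x))) \<in> trig_poly L"
    unfolding Re_eq cnj_fourier_exp by (intro trig_poly_add trig_poly_fourier_exp)
  have Im: "(\<lambda>x. complex_of_real (Im (fourier_exp L 1 x))) \<in> trig_poly L"
    unfolding Im_eq cnj_fourier_exp by (intro trig_poly_add trig_poly_fourier_exp)
  have "Re z *\<^sub>R 1 + Im z *\<^sub>R \<i> = z" for z
    by (simp add: complex_eq_iff)
  then have decomp: "r z = Re z * r 1 + Im z * r \<i>" for z
    using add[of "Re z *\<^sub>R 1" "Im z *\<^sub>R \<i>"] by (simp add: scaleR)
  have "complex_of_real (r (fourier_exp L 1 x))
      = complex_of_real (r 1) * complex_of_real (Re (fourier_exp L 1 x))
        + complex_of_real (r \<i>) * complex_of_real (Im (fourier_exp L 1 x))" for x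
    by (subst decomp) (simp add: mult.commute)
  then show ?case
    using trig_poly_add[OF trig_poly_mult_left[OF Re, of "complex_of_real (r 1)"]
        trig_poly_mult_left[OF Im, of "complex_of_real (r \<i>)"]]
    by simp
next
  case (const c)
  then show ?case by (rule trig_poly_const)
next
  case (add r s)
  then show ?case by (simp add: trig_poly_add)
next
  case (mult r s)
  then show ?case by (simp add: trig_poly_mult)
qed

lemma trig_poly_polynomial_function:
  assumes "polynomial_function (q :: complex \<Rightarrow> complex)"
  shows "(\<lambda>x. q (fourier_exp L 1 x)) \<in> trig_poly L"
proof -
  have "real_polynomial_function (\<lambda>z. inner (q z) b)" if "b \<in> Basis" for b
    using assms that polynomial_function_iff_Basis_inner by blast
  from this[of 1] this[of \<i>]
  have "real_polynomial_function (\<lambda>z. Re (q z))" "real_polynomial_function (\<lambda>z. Im (q z))"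
    by (simp_all add: Basis_complex_def inner_complex_def)
  from this[THEN trig_poly_real_polynomial_function]
  have "(\<lambda>x. complex_of_real (Re (q (fourier_exp L 1 x))) + \<i> * complex_of_real (Im (q (fourier_exp L 1 x))))
    \<in> trig_poly L"
    by (intro trig_poly_add trig_poly_mult_left)
  then show ?thesis by (simp only: complex_eq[symmetric])
qed

section \<open>Density of trigonometric polynomials\<close>

lemma Arg_fourier_exp_1:
  assumes "L > 0" and "x \<in> {-L<..L}"
  shows "Arg (fourier_exp L 1 x) = pi * x / L"
proof (rule Arg_unique[of 1])
  show "complex_of_real 1 * exp (\<i> * complex_of_real (pi * x / L)) = fourier_exp L 1 x"
    unfolding fourier_exp_def fourier_freq_def by (simp add: scaleR_conv_of_real algebra_simps)
  have "pi * (-L) < pi * x" "pi * x \<le> pi * L"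
    using assms(2) mult_strict_left_mono[of "-L" x pi] mult_left_mono[of x L pi] by auto
  then show "- pi < pi * x / L" "pi * x / L \<le> pi"
    using assms(1) by (simp_all add: field_simps)
qed simp

lemma fourier_exp_1_image:
  assumes "L > 0"
  shows "fourier_exp L 1 ` {-L..L} = sphere 0 1"
proof
  show "fourier_exp L 1 ` {-L..L} \<subseteq> sphere 0 1" by auto
  show "sphere 0 1 \<subseteq> fourier_exp L 1 ` {-L..L}"
  proof
    fix z :: complex assume "z \<in> sphere 0 1"
    have "-pi < Arg z" "Arg z \<le> pi" by (rule mpi_less_Arg, rule Arg_le_pi)
    then have "L * (-pi) < L * Arg z" "L * Arg z \<le> L * pi"
      using assms mult_strict_left_mono[of "-pi" "Arg z" L] mult_left_mono[of "Arg z" pi L] by auto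
    then have "L * Arg z / pi \<in> {-L..L}" using assms by (auto simp: field_simps)
    moreover have "fourier_exp L 1 (L * Arg z / pi) = z"
      using \<open>z \<in> sphere 0 1\<close> complex_norm_eq_1_exp_eq[of z] assms
      unfolding fourier_exp_def fourier_freq_def by (simp add: scaleR_conv_of_real algebra_simps)
    ultimately show "z \<in> fourier_exp L 1 ` {-L..L}"
      by (intro image_eqI[of z _ "L * Arg z / pi"]) auto
  qed
qed

text \<open>A continuous periodic function factors continuously through the unit circle,
  because \<open>fourier_exp L 1\<close> is a quotient map from the compact period interval onto it.\<close>
lemma periodic_factor_through_circle:
  assumes "L > 0" and cont: "continuous_on UNIV \<psi>" and per: "periodic L \<psi>"
  obtains \<Psi> where "continuous_on (sphere 0 1) \<Psi>"
    and "\<And>x. x \<in> {-L..L} \<Longrightarrow> \<Psi> (fourier_exp L 1 x) = \<psi> x"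
proof
  define S where "S = {-L..L}"
  define T where "T = sphere (0::complex) 1"
  define q where "q = fourier_exp L 1"
  define \<Psi> where "\<Psi> z = \<psi> (L * Arg z / pi)" for z
  have qS: "q ` S = T" unfolding q_def S_def T_def by (rule fourier_exp_1_image[OF assms(1)])
  show \<Psi>q: "\<Psi> (q x) = \<psi> x" if "x \<in> S" for x
  proof (cases "x = -L")
    case True
    have "q L = q (-L)" "\<psi> L = \<psi> (-L)"
      using per assms(1) unfolding q_def by (auto intro: periodic_endpoints periodic_fourier_exp)
    moreover have "\<Psi> (q L) = \<psi> L"
      unfolding \<Psi>_def q_def using Arg_fourier_exp_1[OF assms(1), of L] assms(1) by simp
    ultimately show ?thesis using True by simp
  next
    case False
    then have "x \<in> {-L<..L}" using that unfolding S_def by auto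
    then show ?thesis unfolding \<Psi>_def q_def using Arg_fourier_exp_1[OF assms(1)] assms(1) by simp
  qed
  have "openin (top_of_set T) (T \<inter> \<Psi> -` U)" if "open U" for U
  proof -
    have "S \<inter> q -` (T \<inter> \<Psi> -` U) = S \<inter> \<psi> -` U"
    proof (intro set_eqI iffI)
      fix x assume "x \<in> S \<inter> q -` (T \<inter> \<Psi> -` U)"
      then show "x \<in> S \<inter> \<psi> -` U" using \<Psi>q[of x] by simp
    next
      fix x assume x: "x \<in> S \<inter> \<psi> -` U"
      then have "q x \<in> T" using qS by blast
      then show "x \<in> S \<inter> q -` (T \<inter> \<Psi> -` U)" using \<Psi>q[of x] x by simp
    qed
    moreover have "openin (top_of_set S) (S \<inter> \<psi> -` U)"
      using continuous_on_subset[OF cont] \<open>open U\<close> by (intro continuous_openin_preimage_gen) auto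
    ultimately show ?thesis
      using Abstract_Topology_2.continuous_imp_quotient_map[of S q T "T \<inter> \<Psi> -` U"] qS
      unfolding S_def q_def by (auto intro: continuous_on_fourier_exp)
  qed
  then show "continuous_on (sphere 0 1) \<Psi>"
    unfolding T_def[symmetric] using continuous_on_open_gen[of \<Psi> T UNIV] by auto
qed

lemma trig_poly_approx:
  assumes "L > 0" and "continuous_on UNIV \<psi>" and "periodic L \<psi>" and "e > 0"
  obtains p where "p \<in> trig_poly L" "\<And>x. x \<in> {-L..L} \<Longrightarrow> norm (\<psi> x - p x) < e"
proof -
  obtain \<Psi> where cont: "continuous_on (sphere 0 1) \<Psi>"
    and \<Psi>: "\<And>x. x \<in> {-L..L} \<Longrightarrow> \<Psi> (fourier_exp L 1 x) = \<psi> x"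
    using periodic_factor_through_circle[OF assms(1-3)] by blast
  obtain q where q: "polynomial_function q" "\<And>z. z \<in> sphere 0 1 \<Longrightarrow> norm (\<Psi> z - q z) < e"
    using Stone_Weierstrass_polynomial_function[OF _ cont assms(4)] by auto
  show thesis
  proof
    show "(\<lambda>x. q (fourier_exp L 1 x)) \<in> trig_poly L"
      by (rule trig_poly_polynomial_function[OF q(1)])
    show "norm (\<psi> x - q (fourier_exp L 1 x)) < e" if "x \<in> {-L..L}" for x
      using q(2)[of "fourier_exp L 1 x"] \<Psi>[OF that] by simp
  qed
qed

lemma eq_0_if_norm_le_eps:
  fixes D :: "'a::real_normed_vector"
  assumes "\<And>e. e > 0 \<Longrightarrow> norm D \<le> K * e"
  shows "D = 0"
proof (rule ccontr)
  assume "D \<noteq> 0"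
  then have n: "norm D > 0" by simp
  with assms[of 1] have K: "K > 0" by linarith
  have "norm D \<le> K * (norm D / (2*K))" using assms[of "norm D / (2*K)"] n K by simp
  then show False using n K by (simp add: field_simps)
qed

lemma trig_poly_conv:
  assumes "L > 0" "H0 L G" "p \<in> trig_poly L"
  obtains q where "q \<in> trig_poly L" "conv L G p = q"
    "\<And>k. fourier_coeff L q k = complex_of_real (Cn L G (nat \<bar>k\<bar>)) * fourier_coeff L p k"
  using assms(3)
proof (induction p arbitrary: thesis rule: trig_poly.induct)
  case zero
  show ?case by (rule zero.prems[of "\<lambda>x. 0"]) (auto simp: conv_def fourier_coeff_def trig_poly.zero)
next
  case (add_term p c j)
  obtain q where q: "q \<in> trig_poly L" "conv L G p = q"
    "\<And>k. fourier_coeff L q k = complex_of_real (Cn L G (nat \<bar>k\<bar>)) * fourier_coeff L p k"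
    using add_term.IH by blast
  define C where "C = c * complex_of_real (Cn L G (nat \<bar>j\<bar>))"
  have cont: "continuous_on {-L..L} p" "continuous_on {-L..L} q"
    using add_term.hyps q(1) by (auto intro: continuous_on_trig_poly)
  show ?case
  proof (rule add_term.prems)
    show "(\<lambda>x. q x + C * fourier_exp L j x) \<in> trig_poly L"
      using q(1) by (rule trig_poly.add_term)
    show "conv L G (\<lambda>x. p x + c * fourier_exp L j x) = (\<lambda>x. q x + C * fourier_exp L j x)"
      using q(2) cont(1) assms(1,2)
      by (auto simp: conv_add conv_mult_left conv_fourier_exp C_def continuous_intros)
    fix k
    have "fourier_coeff L (\<lambda>x. q x + C * fourier_exp L j x) k
        = fourier_coeff L q k + C * fourier_coeff L (fourier_exp L j) k"
      by (subst fourier_coeff_add) (auto intro!: continuous_intros cont simp: fourier_coeff_mult_left)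
    moreover have "fourier_coeff L (\<lambda>x. p x + c * fourier_exp L j x) k
        = fourier_coeff L p k + c * fourier_coeff L (fourier_exp L j) k"
      by (subst fourier_coeff_add) (auto intro!: continuous_intros cont simp: fourier_coeff_mult_left)
    ultimately show "fourier_coeff L (\<lambda>x. q x + C * fourier_exp L j x) k
        = complex_of_real (Cn L G (nat \<bar>k\<bar>)) * fourier_coeff L (\<lambda>x. p x + c * fourier_exp L j x) k"
      using q(3)[of k] by (simp add: fourier_coeff_fourier_exp[OF assms(1)] C_def algebra_simps)
  qed
qed

text \<open>By density it suffices to check this on trigonometric polynomials, where it
  follows from the eigenfunction property of the characters.\<close>
lemma fourier_coeff_conv:
  assumes "L > 0" "H0 L G" and cont: "continuous_on UNIV \<psi>" and per: "periodic L \<psi>"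
    and cont_conv: "continuous_on {-L..L} (conv L G \<psi>)"
  shows "fourier_coeff L (conv L G \<psi>) k = complex_of_real (Cn L G (nat \<bar>k\<bar>)) * fourier_coeff L \<psi> k"
proof -
  define C where "C = complex_of_real (Cn L G (nat \<bar>k\<bar>))"
  have cont\<psi>: "continuous_on {-L..L} \<psi>" using cont by (rule continuous_on_subset) simp
  have "norm (fourier_coeff L (conv L G \<psi>) k - C * fourier_coeff L \<psi> k) \<le> (2*L*(1 + norm C)) * e"
    if "e > 0" for e
  proof -
    obtain p where p: "p \<in> trig_poly L" "\<And>x. x \<in> {-L..L} \<Longrightarrow> norm (\<psi> x - p x) < e"
      using trig_poly_approx[OF assms(1) cont per \<open>e > 0\<close>] by blast
    obtain q where q: "q \<in> trig_poly L" "conv L G p = q" "fourier_coeff L q k = C * fourier_coeff L p k"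
      using trig_poly_conv[OF assms(1,2) p(1)] unfolding C_def by metis
    have cont_pq: "continuous_on {-L..L} p" "continuous_on {-L..L} q"
      using p(1) q(1) by (auto intro: continuous_on_trig_poly)
    have "norm (conv L G \<psi> x - q x) \<le> e" if "x \<in> {-L..L}" for x
    proof -
      have "conv L G \<psi> x - q x = conv L G (\<lambda>y. \<psi> y - p y) x"
        using conv_diff[OF assms(1,2) cont\<psi> cont_pq(1)] q(2) by simp
      also have "norm \<dots> \<le> e"
        using cont\<psi> cont_pq p(2)
        by (intro norm_conv_le[OF assms(1,2)]) (auto intro!: continuous_intros less_imp_le)
      finally show ?thesis .
    qed
    then have n1: "norm (fourier_coeff L (\<lambda>x. conv L G \<psi> x - q x) k) \<le> e * (2*L)"
      by (intro norm_fourier_coeff_le[OF assms(1)]) (auto intro!: continuous_intros cont_conv cont_pq)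
    have n2: "norm (fourier_coeff L (\<lambda>x. \<psi> x - p x) k) \<le> e * (2*L)"
      using p(2) by (intro norm_fourier_coeff_le[OF assms(1)])
        (auto intro!: continuous_intros cont\<psi> cont_pq less_imp_le)
    have "fourier_coeff L (conv L G \<psi>) k - C * fourier_coeff L \<psi> k =
          fourier_coeff L (\<lambda>x. conv L G \<psi> x - q x) k - C * fourier_coeff L (\<lambda>x. \<psi> x - p x) k"
      unfolding fourier_coeff_diff[OF cont_conv cont_pq(2)] fourier_coeff_diff[OF cont\<psi> cont_pq(1)] q(3)
      by (simp add: algebra_simps)
    also have "norm \<dots> \<le> e * (2*L) + norm C * (e * (2*L))"
      using n1 n2 norm_triangle_ineq4 norm_mult mult_left_mono norm_ge_zero
      by (smt (verit))
    also have "\<dots> = (2*L*(1 + norm C)) * e" by (simp add: algebra_simps)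
    finally show ?thesis .
  qed
  then show ?thesis unfolding C_def[symmetric] by (intro eq_0_if_norm_le_eps[THEN right_minus_eq[THEN iffD1]])
qed

lemma integral_mult_cnj_trig_poly:
  assumes "continuous_on {-L..L} \<psi>" "\<And>k. fourier_coeff L \<psi> k = 0"
  shows "p \<in> trig_poly L \<Longrightarrow> integral {-L..L} (\<lambda>x. \<psi> x * cnj (p x)) = 0"
proof (induction p rule: trig_poly.induct)
  case (add_term p c k)
  have "\<psi> x * cnj (p x + c * fourier_exp L k x) = \<psi> x * cnj (p x) + cnj c * (\<psi> x * fourier_exp L (-k) x)" for x
    by (simp add: cnj_fourier_exp algebra_simps)
  moreover have "continuous_on {-L..L} p" using add_term.hyps by (rule continuous_on_trig_poly)
  ultimately have "integral {-L..L} (\<lambda>x. \<psi> x * cnj (p x + c * fourier_exp L k x)) =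
      integral {-L..L} (\<lambda>x. \<psi> x * cnj (p x)) + integral {-L..L} (\<lambda>x. cnj c * (\<psi> x * fourier_exp L (-k) x))"
    using assms(1) by (simp only:) (intro integral_add integrable_continuous_real continuous_intros)
  also have "\<dots> = 0" using add_term.IH assms(2)[of k] unfolding fourier_coeff_def by simp
  finally show ?case .
qed simp

text \<open>\<open>\<psi>\<close> is orthogonal to every trigonometric polynomial, hence, by density, to itself.\<close>
lemma integral_norm_square_eq_0_if_fourier_coeff_eq_0:
  assumes "L > 0" and cont: "continuous_on UNIV \<psi>" and "periodic L \<psi>"
    and "\<And>k. fourier_coeff L \<psi> k = 0"
  shows "integral {-L..L} (\<lambda>x. (norm (\<psi> x))\<^sup>2) = 0"
proof -
  have cont\<psi>: "continuous_on {-L..L} \<psi>" using cont by (rule continuous_on_subset) simp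
  obtain M where "\<forall>x \<in> {-L..L}. norm (\<psi> x) \<le> M"
    using compact_imp_bounded[OF compact_continuous_image[OF cont\<psi>]] unfolding bounded_iff by auto
  then have M: "norm (\<psi> x) \<le> M" if "x \<in> {-L..L}" for x using that by blast
  define I where "I = integral {-L..L} (\<lambda>x. \<psi> x * cnj (\<psi> x))"
  have "norm I \<le> (M * (2*L)) * e" if "e > 0" for e
  proof -
    obtain p where p: "p \<in> trig_poly L" "\<And>x. x \<in> {-L..L} \<Longrightarrow> norm (\<psi> x - p x) < e"
      using trig_poly_approx[OF assms(1-3) \<open>e > 0\<close>] by blast
    have cont_p: "continuous_on {-L..L} p" using p(1) by (rule continuous_on_trig_poly)
    have "I = integral {-L..L} (\<lambda>x. \<psi> x * cnj (\<psi> x - p x)) + integral {-L..L} (\<lambda>x. \<psi> x * cnj (p x))"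
      unfolding I_def
      by (subst integral_add[symmetric])
         (auto intro!: integrable_continuous_real continuous_intros cont\<psi> cont_p simp: algebra_simps)
    also have "\<dots> = integral {-L..L} (\<lambda>x. \<psi> x * cnj (\<psi> x - p x))"
      using integral_mult_cnj_trig_poly[OF cont\<psi> assms(4) p(1)] by simp
    also have "norm \<dots> \<le> (M * e) * (L - (-L))"
    proof (rule integral_bound)
      show "continuous_on {-L..L} (\<lambda>x. \<psi> x * cnj (\<psi> x - p x))"
        by (intro continuous_intros cont\<psi> cont_p)
      fix t assume t: "t \<in> {-L..L}"
      have "0 \<le> M" using M[OF t] norm_ge_zero[of "\<psi> t"] by linarith
      then have "norm (\<psi> t) * norm (\<psi> t - p t) \<le> M * e"
        using M[OF t] p(2)[OF t] by (intro mult_mono) auto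
      then show "norm (\<psi> t * cnj (\<psi> t - p t)) \<le> M * e"
        by (simp only: norm_mult complex_mod_cnj)
    qed (use assms(1) in simp)
    finally show ?thesis by (simp add: algebra_simps)
  qed
  then have "I = 0" by (rule eq_0_if_norm_le_eps)
  moreover have "I = integral {-L..L} (\<lambda>x. complex_of_real ((norm (\<psi> x))\<^sup>2))"
    unfolding I_def complex_norm_square ..
  moreover have "\<dots> = complex_of_real (integral {-L..L} (\<lambda>x. (norm (\<psi> x))\<^sup>2))"
    using integral_linear[OF _ bounded_linear_of_real, of "\<lambda>x. (norm (\<psi> x))\<^sup>2" "{-L..L}"]
    by (simp add: o_def integrable_continuous_real continuous_intros cont\<psi>)
  ultimately show ?thesis by simp
qed

lemma fourier_coeff_eq_0_imp_eq_0:
  assumes "L > 0" and cont: "continuous_on UNIV \<psi>" and per: "periodic L \<psi>"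
    and "\<And>k. fourier_coeff L \<psi> k = 0"
  shows "\<psi> x = 0"
proof -
  have "continuous_on {-L..L} \<psi>" using cont by (rule continuous_on_subset) simp
  then have cont_sq: "continuous_on {-L..L} (\<lambda>x. (norm (\<psi> x))\<^sup>2)"
    by (intro continuous_intros)
  have "((\<lambda>x. (norm (\<psi> x))\<^sup>2) has_integral 0) (cbox (-L) L)"
    using integral_norm_square_eq_0_if_fourier_coeff_eq_0[OF assms]
      integrable_integral[OF integrable_continuous_real[OF cont_sq]] by simp
  then have zero: "\<psi> t = 0" if "t \<in> {-L..L}" for t
    using has_integral_0_cbox_imp_0[of "-L" L "\<lambda>x. (norm (\<psi> x))\<^sup>2" t] cont_sq that assms(1)
    by auto
  obtain t m where "t \<in> {-L..L}" "x = t + real_of_int m * (2*L)"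
    using periodic_representative[OF assms(1)] .
  then show ?thesis using zero periodic_add_int_multiple[OF per] by simp
qed

section \<open>The spectrum of the linearisation\<close>

definition kdecay :: "real \<Rightarrow> real \<Rightarrow> (real \<Rightarrow> real) \<Rightarrow> real" where
  "kdecay \<mu> \<beta> g = g 1 + \<mu> + \<beta>"

definition kcoupling :: "real \<Rightarrow> real \<Rightarrow> real \<Rightarrow> (real \<Rightarrow> real) \<Rightarrow> real" where
  "kcoupling \<mu> \<beta> \<kappa> g = deriv g 1 * (\<kappa> - kstar (g 1) \<kappa> \<mu> \<beta>) - \<beta> * kstar (g 1) \<kappa> \<mu> \<beta>"

text \<open>On the \<open>n\<close>-th Fourier mode the linearisation acts by the matrix
  \<open>[[f'(1) - d l\<^sub>n, -\<alpha> C\<^sub>n l\<^sub>n], [kcoupling, -kdecay]]\<close>;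
  \<open>disp_trace\<close> and \<open>disp_const\<close> are minus its trace and its determinant.\<close>
definition disp_trace :: "real \<Rightarrow> real \<Rightarrow> real \<Rightarrow> real \<Rightarrow> (real \<Rightarrow> real) \<Rightarrow> (real \<Rightarrow> real)
    \<Rightarrow> nat \<Rightarrow> real" where
  "disp_trace L d \<mu> \<beta> f g n = kdecay \<mu> \<beta> g + d * lam L n - deriv f 1"

definition disp_const :: "real \<Rightarrow> real \<Rightarrow> real \<Rightarrow> real \<Rightarrow> real \<Rightarrow> real \<Rightarrow> (real \<Rightarrow> real)
    \<Rightarrow> (real \<Rightarrow> real) \<Rightarrow> (real \<Rightarrow> real) \<Rightarrow> nat \<Rightarrow> real" where
  "disp_const L d \<alpha> \<mu> \<beta> \<kappa> G f g n =
     kdecay \<mu> \<beta> g * (d * lam L n - deriv f 1) + \<alpha> * kcoupling \<mu> \<beta> \<kappa> g * Cn L G n * lam L n"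

lemma fourier_coeff_nonlocal_diffusion:
  assumes "L > 0" "H0 L G" and per: "periodic L \<phi>" "periodic L \<psi>" and cont\<psi>: "continuous_on UNIV \<psi>"
    and \<phi>1: "\<And>x. (\<phi> has_vector_derivative \<phi>1 x) (at x)"
    and \<phi>2: "\<And>x. (\<phi>1 has_vector_derivative \<phi>2 x) (at x)"
    and h1: "\<And>x. (conv L G \<psi> has_vector_derivative h1 x) (at x)"
    and h2: "\<And>x. (h1 has_vector_derivative h2 x) (at x)"
    and eq: "\<And>x. of_real c\<^sub>1 * \<phi>2 x + of_real c\<^sub>2 * h2 x + of_real c\<^sub>0 * \<phi> x = ev * \<phi> x"
  shows "ev * fourier_coeff L \<phi> k
    = complex_of_real (c\<^sub>0 - c\<^sub>1 * lam L (nat \<bar>k\<bar>)) * fourier_coeff L \<phi> k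
      - complex_of_real (c\<^sub>2 * Cn L G (nat \<bar>k\<bar>) * lam L (nat \<bar>k\<bar>)) * fourier_coeff L \<psi> k"
proof -
  let ?e = "fourier_exp L (-k)" and ?l = "lam L (nat \<bar>k\<bar>)" and ?C = "Cn L G (nat \<bar>k\<bar>)"
    and ?\<Phi> = "fourier_coeff L \<phi> k" and ?\<Psi> = "fourier_coeff L \<psi> k"
  have cont_conv: "continuous_on {-L..L} (conv L G \<psi>)"
    by (rule continuous_on_vector_derivative) (rule has_vector_derivative_at_within[OF h1])
  have int_\<phi>2: "((\<lambda>x. \<phi>2 x * ?e x) has_integral - of_real ?l * ?\<Phi>) {-L..L}"
    by (rule has_integral_fourier_coeff_second_deriv[OF assms(1) per(1) \<phi>1 \<phi>2])
  have int_h2: "((\<lambda>x. h2 x * ?e x) has_integral - of_real ?l * (of_real ?C * ?\<Psi>)) {-L..L}"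
    using has_integral_fourier_coeff_second_deriv[OF assms(1) periodic_conv[OF assms(2)] h1 h2, of k]
      fourier_coeff_conv[OF assms(1,2) cont\<psi> per(2) cont_conv] by simp
  have "continuous_on {-L..L} \<phi>"
    by (rule continuous_on_vector_derivative) (rule has_vector_derivative_at_within[OF \<phi>1])
  then have int_\<phi>: "((\<lambda>x. \<phi> x * ?e x) has_integral ?\<Phi>) {-L..L}"
    unfolding fourier_coeff_def
    by (intro integrable_integral integrable_continuous_real continuous_on_mult continuous_on_fourier_exp)
  have "((\<lambda>x. (of_real c\<^sub>1 * \<phi>2 x + of_real c\<^sub>2 * h2 x + of_real c\<^sub>0 * \<phi> x) * ?e x)
      has_integral of_real c\<^sub>1 * (- of_real ?l * ?\<Phi>) + of_real c\<^sub>2 * (- of_real ?l * (of_real ?C * ?\<Psi>))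
        + of_real c\<^sub>0 * ?\<Phi>) {-L..L}"
    using has_integral_add[OF has_integral_add[OF has_integral_mult_right[OF int_\<phi>2, of "of_real c\<^sub>1"]
        has_integral_mult_right[OF int_h2, of "of_real c\<^sub>2"]] has_integral_mult_right[OF int_\<phi>, of "of_real c\<^sub>0"]]
    by (simp add: algebra_simps)
  moreover have "((\<lambda>x. (of_real c\<^sub>1 * \<phi>2 x + of_real c\<^sub>2 * h2 x + of_real c\<^sub>0 * \<phi> x) * ?e x)
      has_integral ev * ?\<Phi>) {-L..L}"
    unfolding eq mult.assoc by (rule has_integral_mult_right) fact
  ultimately show ?thesis by (auto dest: has_integral_unique simp: algebra_simps)
qed

lemma lin_eigenvalue_fourier_modes:
  assumes "L > 0" "H0 L G" "lin_eigenvalue L d \<alpha> \<mu> \<beta> \<kappa> G f g ev"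
  obtains \<Phi> \<Psi> :: "int \<Rightarrow> complex" where
    "ev = - complex_of_real (kdecay \<mu> \<beta> g) \<or> (\<exists>k. \<Phi> k \<noteq> 0)"
    "\<And>k. ev * \<Phi> k = complex_of_real (deriv f 1 - d * lam L (nat \<bar>k\<bar>)) * \<Phi> k
           - complex_of_real (\<alpha> * Cn L G (nat \<bar>k\<bar>) * lam L (nat \<bar>k\<bar>)) * \<Psi> k"
    "\<And>k. ev * \<Psi> k = complex_of_real (kcoupling \<mu> \<beta> \<kappa> g) * \<Phi> k
           - complex_of_real (kdecay \<mu> \<beta> g) * \<Psi> k"
proof -
  define a where "a = kcoupling \<mu> \<beta> \<kappa> g"
  define b where "b = kdecay \<mu> \<beta> g"
  obtain \<phi> \<phi>1 \<phi>2 \<psi> h1 h2 where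
    nonzero: "\<phi> \<noteq> (\<lambda>_. 0) \<or> \<psi> \<noteq> (\<lambda>_. 0)" and per: "periodic L \<phi>" "periodic L \<psi>" and
    cont\<psi>: "continuous_on UNIV \<psi>" and
    \<phi>1: "\<And>x. (\<phi> has_vector_derivative \<phi>1 x) (at x)" and
    \<phi>2: "\<And>x. (\<phi>1 has_vector_derivative \<phi>2 x) (at x)" and
    h1: "\<And>x. (conv L G \<psi> has_vector_derivative h1 x) (at x)" and
    h2: "\<And>x. (h1 has_vector_derivative h2 x) (at x)" and
    eq_u: "\<And>x. of_real d * \<phi>2 x + of_real \<alpha> * h2 x + of_real (deriv f 1) * \<phi> x = ev * \<phi> x" and
    eq_k: "\<And>x. of_real a * \<phi> x - of_real b * \<psi> x = ev * \<psi> x"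
    using assms(3) unfolding lin_eigenvalue_def Let_def a_def b_def kcoupling_def kdecay_def
    by blast
  have cont\<phi>: "continuous_on UNIV \<phi>"
    by (rule continuous_on_vector_derivative) (rule has_vector_derivative_at_within[OF \<phi>1])
  show thesis
  proof (rule that[folded a_def b_def])
    show "ev = - complex_of_real b \<or> (\<exists>k. fourier_coeff L \<phi> k \<noteq> 0)"
    proof (cases "\<forall>x. \<phi> x = 0")
      case True
      then obtain x where "\<psi> x \<noteq> 0" using nonzero by auto
      moreover have "- of_real b * \<psi> x = ev * \<psi> x" using eq_k[of x] True by simp
      ultimately have "ev = - of_real b" by (metis mult_cancel_right)
      then show ?thesis ..
    next
      case False
      then show ?thesis using fourier_coeff_eq_0_imp_eq_0[OF assms(1) cont\<phi> per(1)] by blast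
    qed
    show "ev * fourier_coeff L \<phi> k = complex_of_real (deriv f 1 - d * lam L (nat \<bar>k\<bar>)) * fourier_coeff L \<phi> k
        - complex_of_real (\<alpha> * Cn L G (nat \<bar>k\<bar>) * lam L (nat \<bar>k\<bar>)) * fourier_coeff L \<psi> k" for k
      by (rule fourier_coeff_nonlocal_diffusion[OF assms(1,2) per cont\<psi> \<phi>1 \<phi>2 h1 h2 eq_u])
    have "fourier_coeff L (\<lambda>x. of_real a * \<phi> x - of_real b * \<psi> x) k
        = of_real a * fourier_coeff L \<phi> k - of_real b * fourier_coeff L \<psi> k" for k
      by (subst fourier_coeff_diff) (auto intro!: continuous_intros continuous_on_subset[OF cont\<phi>]
          continuous_on_subset[OF cont\<psi>] simp: fourier_coeff_mult_left)
    then show "ev * fourier_coeff L \<psi> k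
        = complex_of_real a * fourier_coeff L \<phi> k - complex_of_real b * fourier_coeff L \<psi> k" for k
      unfolding eq_k fourier_coeff_mult_left by simp
  qed
qed

lemma lin_eigenvalue_imp_dispersion:
  assumes "L > 0" "H0 L G" "lin_eigenvalue L d \<alpha> \<mu> \<beta> \<kappa> G f g ev"
  shows "ev = - complex_of_real (kdecay \<mu> \<beta> g) \<or>
    (\<exists>n. ev * ev + of_real (disp_trace L d \<mu> \<beta> f g n) * ev + of_real (disp_const L d \<alpha> \<mu> \<beta> \<kappa> G f g n) = 0)"
proof -
  obtain \<Phi> \<Psi> :: "int \<Rightarrow> complex" where
    cases: "ev = - complex_of_real (kdecay \<mu> \<beta> g) \<or> (\<exists>k. \<Phi> k \<noteq> 0)" and
    eq_u: "\<And>k. ev * \<Phi> k = complex_of_real (deriv f 1 - d * lam L (nat \<bar>k\<bar>)) * \<Phi> k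
           - complex_of_real (\<alpha> * Cn L G (nat \<bar>k\<bar>) * lam L (nat \<bar>k\<bar>)) * \<Psi> k" and
    eq_k: "\<And>k. ev * \<Psi> k = complex_of_real (kcoupling \<mu> \<beta> \<kappa> g) * \<Phi> k
           - complex_of_real (kdecay \<mu> \<beta> g) * \<Psi> k"
    using lin_eigenvalue_fourier_modes[OF assms] by blast
  show ?thesis
  proof (cases "ev = - complex_of_real (kdecay \<mu> \<beta> g)")
    case False
    then obtain k where "\<Phi> k \<noteq> 0" using cases by blast
    let ?n = "nat \<bar>k\<bar>"
    let ?B = "complex_of_real (kdecay \<mu> \<beta> g)" and ?A = "complex_of_real (kcoupling \<mu> \<beta> \<kappa> g)"
      and ?F = "complex_of_real (deriv f 1 - d * lam L ?n)"
      and ?K = "complex_of_real (\<alpha> * Cn L G ?n * lam L ?n)"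
    \<comment> \<open>eliminate \<open>\<Psi> k\<close> between the two mode equations\<close>
    have "((ev + ?B) * (ev - ?F) + ?K * ?A) * \<Phi> k = 0"
      using eq_u[of k] eq_k[of k] by algebra
    moreover have "ev * ev + of_real (disp_trace L d \<mu> \<beta> f g ?n) * ev
        + of_real (disp_const L d \<alpha> \<mu> \<beta> \<kappa> G f g ?n) = (ev + ?B) * (ev - ?F) + ?K * ?A"
      unfolding disp_trace_def disp_const_def by (simp add: algebra_simps)
    ultimately show ?thesis using \<open>\<Phi> k \<noteq> 0\<close> by auto
  qed simp
qed

text \<open>An eigenvalue with eigenfunction \<open>(e\<^sub>n, P e\<^sub>n)\<close> for the single Fourier mode \<open>e\<^sub>n\<close>.\<close>
lemma lin_eigenvalue_single_mode:
  assumes "L > 0" "H0 L G"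
    and eq_u: "of_real (deriv f 1 - d * lam L n) - of_real (\<alpha> * Cn L G n * lam L n) * P = ev"
    and eq_k: "of_real (kcoupling \<mu> \<beta> \<kappa> g) - of_real (kdecay \<mu> \<beta> g) * P = ev * P"
  shows "lin_eigenvalue L d \<alpha> \<mu> \<beta> \<kappa> G f g ev"
proof -
  define e where "e = fourier_exp L (int n)"
  define w where "w = fourier_freq L (int n)"
  define K where "K = P * complex_of_real (Cn L G n)"
  have ww: "w * w = - complex_of_real (lam L n)"
    unfolding w_def using fourier_freq_square[of L "int n"] by simp
  have de: "(e has_vector_derivative w * e x) (at x)" for x
    unfolding e_def w_def by (rule fourier_exp_has_vector_derivative)
  have conv: "conv L G (\<lambda>x. P * e x) = (\<lambda>x. K * e x)"
    unfolding K_def e_def by (simp add: fun_eq_iff conv_mult_left conv_fourier_exp[OF assms(1,2)])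
  have per: "periodic L e" unfolding e_def using assms(1) by (intro periodic_fourier_exp) simp
  show ?thesis
    unfolding lin_eigenvalue_def Let_def
  proof (intro exI conjI allI)
    show "e \<noteq> (\<lambda>_. 0) \<or> (\<lambda>x. P * e x) \<noteq> (\<lambda>_. 0)"
      unfolding e_def by (metis fourier_exp_nonzero)
    show "periodic L e" "periodic L (\<lambda>x. P * e x)"
      using per unfolding periodic_def by simp_all
    show "continuous_on UNIV (\<lambda>x. P * e x)"
      unfolding e_def by (intro continuous_intros)
    fix x
    show "(e has_vector_derivative w * e x) (at x)" by (rule de)
    show "((\<lambda>x. w * e x) has_vector_derivative w * (w * e x)) (at x)"
      by (rule has_vector_derivative_mult_right[OF de])
    show "(conv L G (\<lambda>x. P * e x) has_vector_derivative K * (w * e x)) (at x)"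
      unfolding conv by (rule has_vector_derivative_mult_right[OF de])
    show "((\<lambda>x. K * (w * e x)) has_vector_derivative K * (w * (w * e x))) (at x)"
      by (intro has_vector_derivative_mult_right de)
    have "of_real d * (w * w) + of_real \<alpha> * (K * (w * w)) + of_real (deriv f 1) = ev"
      using eq_u unfolding ww K_def by (simp add: algebra_simps)
    then have "(of_real d * (w * w) + of_real \<alpha> * (K * (w * w)) + of_real (deriv f 1)) * e x = ev * e x"
      by simp
    then show "of_real d * (w * (w * e x)) + of_real \<alpha> * (K * (w * (w * e x))) + of_real (deriv f 1) * e x
        = ev * e x" by (simp add: algebra_simps)
    show "of_real (deriv g 1 * (\<kappa> - kstar (g 1) \<kappa> \<mu> \<beta>) - \<beta> * kstar (g 1) \<kappa> \<mu> \<beta>) * e x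
        - of_real (g 1 + \<mu> + \<beta>) * (P * e x) = ev * (P * e x)"
      using arg_cong[OF eq_k, of "\<lambda>z. z * e x"] unfolding kcoupling_def kdecay_def
      by (simp add: algebra_simps)
  qed
qed

lemma lin_eigenvalue_if_dispersion:
  assumes "L > 0" "H0 L G"
    and root: "ev * ev + of_real (disp_trace L d \<mu> \<beta> f g n) * ev
        + of_real (disp_const L d \<alpha> \<mu> \<beta> \<kappa> G f g n) = 0"
    and not_decay: "ev \<noteq> - complex_of_real (kdecay \<mu> \<beta> g)"
  shows "lin_eigenvalue L d \<alpha> \<mu> \<beta> \<kappa> G f g ev"
proof -
  define B where "B = complex_of_real (kdecay \<mu> \<beta> g)"
  define A where "A = complex_of_real (kcoupling \<mu> \<beta> \<kappa> g)"
  define P where "P = A / (ev + B)"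
  have evB: "ev + B \<noteq> 0" using not_decay unfolding B_def by (simp add: eq_neg_iff_add_eq_0)
  then have eq_k: "A - B * P = ev * P" unfolding P_def by (simp add: field_simps)
  have "(ev + B) * (of_real (deriv f 1 - d * lam L n) - of_real (\<alpha> * Cn L G n * lam L n) * P - ev) = 0"
    using root evB unfolding P_def A_def B_def disp_trace_def disp_const_def by (simp add: field_simps)
  with evB have "of_real (deriv f 1 - d * lam L n) - of_real (\<alpha> * Cn L G n * lam L n) * P = ev"
    by simp
  from lin_eigenvalue_single_mode[OF assms(1,2) this eq_k[unfolded A_def B_def]] show ?thesis .
qed

section \<open>Stability and instability criteria\<close>

lemma Re_quadratic_root_le:
  fixes z :: complex and T c :: real
  assumes "T > 0" "c > 0" and root: "z * z + of_real T * z + of_real c = 0"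
  shows "Re z \<le> - min (T/2) (c/T)"
proof -
  obtain x y where z: "z = Complex x y" by (cases z)
  have re: "x*x - y*y + T*x + c = 0" using arg_cong[OF root, of Re] z by simp
  have im: "(2*x + T) * y = 0" using arg_cong[OF root, of Im] z by (simp add: algebra_simps)
  show ?thesis
  proof (cases "y = 0")
    case True
    \<comment> \<open>a real root satisfies \<open>T x + c = - x\<^sup>2 \<le> 0\<close>\<close>
    then have "x*T + c = - (x*x)" using re by (simp add: algebra_simps)
    then have "x*T \<le> -c" by (smt (verit) zero_le_square)
    then have "x \<le> -c/T" using assms(1) by (simp add: field_simps)
    then show ?thesis using z by simp
  next
    case False
    then have "2*x + T = 0" using im by simp
    then have "x = -(T/2)" by simp
    then show ?thesis using z min.cobounded1[of "T/2" "c/T"] by simp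
  qed
qed

lemma quadratic_positive_root:
  fixes T c :: real
  assumes "c < 0"
  shows "\<exists>r>0. r * r + T * r + c = 0"
proof -
  define s where "s = sqrt (T*T - 4*c)"
  have "T*T - 4*c \<ge> 0" using assms zero_le_square[of T] by linarith
  then have s2: "s * s = T*T - 4*c" unfolding s_def by simp
  have "sqrt (T*T) < s" unfolding s_def using assms by (intro real_sqrt_less_mono) simp
  then have "T < s" by simp
  define r where "r = (s - T) / 2"
  have "4 * (r * r + T * r + c) = s * s - (T * T - 4*c)"
    unfolding r_def by (simp add: field_simps)
  then have "r * r + T * r + c = 0" unfolding s2 by simp
  moreover have "r > 0" unfolding r_def using \<open>T < s\<close> by simp
  ultimately show ?thesis by blast
qed

lemma lam_0 [simp]: "lam L 0 = 0"
  unfolding lam_def by simp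

lemma lam_pos: "L \<noteq> 0 \<Longrightarrow> n \<ge> 1 \<Longrightarrow> lam L n > 0"
  unfolding lam_def by simp

lemma lam_ge_lam_1: "n \<ge> 1 \<Longrightarrow> lam L 1 \<le> lam L n"
  unfolding lam_def by (intro divide_right_mono mult_right_mono) simp_all

lemma lin_unstable_if_disp_const_neg:
  assumes "L > 0" "H0 L G" "kdecay \<mu> \<beta> g > 0" "disp_const L d \<alpha> \<mu> \<beta> \<kappa> G f g n < 0"
  shows "lin_unstable L d \<alpha> \<mu> \<beta> \<kappa> G f g"
proof -
  obtain r where "r > 0"
    and "r * r + disp_trace L d \<mu> \<beta> f g n * r + disp_const L d \<alpha> \<mu> \<beta> \<kappa> G f g n = 0"
    using quadratic_positive_root[OF assms(4)] by blast
  then have "complex_of_real r * complex_of_real r + of_real (disp_trace L d \<mu> \<beta> f g n) * complex_of_real r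
      + of_real (disp_const L d \<alpha> \<mu> \<beta> \<kappa> G f g n) = 0"
    by (metis of_real_0 of_real_add of_real_mult)
  moreover have "complex_of_real r \<noteq> - complex_of_real (kdecay \<mu> \<beta> g)"
    using \<open>r > 0\<close> assms(3) by (metis neg_0_less_iff_less not_less_iff_gr_or_eq of_real_eq_iff of_real_minus)
  ultimately have "lin_eigenvalue L d \<alpha> \<mu> \<beta> \<kappa> G f g (complex_of_real r)"
    by (rule lin_eigenvalue_if_dispersion[OF assms(1,2)])
  then show ?thesis unfolding lin_unstable_def using \<open>r > 0\<close> by force
qed

lemma divide_affine_mono:
  fixes K d x y :: real
  assumes "K > 0" "d \<ge> 0" "0 < x" "x \<le> y"
  shows "x / (K + d * x) \<le> y / (K + d * y)"
proof -
  have "x * (K + d * y) \<le> y * (K + d * x)"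
    using assms by (simp add: algebra_simps mult_right_mono)
  then show ?thesis using assms by (simp add: divide_simps add_pos_nonneg)
qed

text \<open>By \<open>Re_quadratic_root_le\<close>, \<open>\<omega>\<close> bounds the real parts of all roots of the dispersion
  relations by \<open>-\<omega>\<close>.\<close>
lemma disp_uniform_gap:
  assumes "L > 0" "d > 0" "deriv f 1 < 0" "kdecay \<mu> \<beta> g > 0" "\<epsilon> > 0"
    and growth: "\<And>n. n \<ge> 1 \<Longrightarrow> \<epsilon> * lam L n \<le> disp_const L d \<alpha> \<mu> \<beta> \<kappa> G f g n"
  obtains \<omega> where "\<omega> > 0" "\<omega> \<le> kdecay \<mu> \<beta> g"
    "\<And>n. 0 < disp_trace L d \<mu> \<beta> f g n \<and> \<omega> \<le> disp_trace L d \<mu> \<beta> f g n / 2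
        \<and> \<omega> \<le> disp_const L d \<alpha> \<mu> \<beta> \<kappa> G f g n / disp_trace L d \<mu> \<beta> f g n"
proof
  define b where "b = kdecay \<mu> \<beta> g"
  define F where "F = deriv f 1"
  define K where "K = b - F"
  \<comment> \<open>the three terms bound \<open>T\<^sub>n / 2\<close>, \<open>c\<^sub>0 / T\<^sub>0\<close> and, since \<open>x \<mapsto> \<epsilon> x / (K + d x)\<close> increases,
    \<open>c\<^sub>n / T\<^sub>n\<close> for \<open>n \<ge> 1\<close>\<close>
  define \<omega> where "\<omega> = min (b/2) (min (- b * F / K) (\<epsilon> * lam L 1 / (K + d * lam L 1)))"
  have "b > 0" "F < 0" "K > 0" using assms unfolding b_def F_def K_def by simp_all
  have l1: "lam L 1 > 0" using assms(1) by (simp add: lam_pos)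
  have "b * F / K < 0"
    using \<open>b > 0\<close> \<open>F < 0\<close> \<open>K > 0\<close> by (simp add: mult_pos_neg divide_neg_pos)
  then show "\<omega> > 0" unfolding \<omega>_def
    using \<open>b > 0\<close> \<open>K > 0\<close> l1 assms(2,5) by (simp add: add_pos_pos)
  have \<omega>_half: "\<omega> \<le> b/2" unfolding \<omega>_def by (rule min.cobounded1)
  then show "\<omega> \<le> kdecay \<mu> \<beta> g" using \<open>b > 0\<close> unfolding b_def by linarith
  fix n
  let ?T = "disp_trace L d \<mu> \<beta> f g n" and ?c = "disp_const L d \<alpha> \<mu> \<beta> \<kappa> G f g n"
    and ?l = "lam L n"
  have T: "?T = K + d * ?l" unfolding disp_trace_def K_def b_def F_def by simp
  have "?l \<ge> 0" using assms(1) by (cases "n = 0") (auto simp: lam_pos less_imp_le)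
  then have "?T \<ge> K" using T assms(2) by simp
  then have "0 < ?T" "\<omega> \<le> ?T / 2" using \<omega>_half \<open>K > 0\<close> \<open>F < 0\<close> K_def by linarith+
  moreover have "\<omega> \<le> ?c / ?T"
  proof (cases "n = 0")
    case True
    then have "?c / ?T = - b * F / K"
      unfolding T disp_const_def b_def F_def by simp
    then show ?thesis unfolding \<omega>_def by simp
  next
    case False
    have "\<epsilon> * lam L 1 / (K + d * lam L 1) \<le> \<epsilon> * ?l / (K + d * ?l)"
      using divide_affine_mono[of K d "lam L 1" ?l] \<open>K > 0\<close> assms(2,5) l1 lam_ge_lam_1[of n L] False
      by (simp add: times_divide_eq_right[symmetric] mult_left_mono del: times_divide_eq_right)
    also have "\<dots> \<le> ?c / ?T"
      unfolding T[symmetric] using growth[of n] False \<open>0 < ?T\<close> by (simp add: divide_right_mono)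
    finally show ?thesis unfolding \<omega>_def by simp
  qed
  ultimately show "0 < ?T \<and> \<omega> \<le> ?T / 2 \<and> \<omega> \<le> ?c / ?T" by blast
qed

lemma lin_stable_if_disp_const_growth:
  assumes "L > 0" "H0 L G" "d > 0" "deriv f 1 < 0" "kdecay \<mu> \<beta> g > 0" "\<epsilon> > 0"
    and "\<And>n. n \<ge> 1 \<Longrightarrow> \<epsilon> * lam L n \<le> disp_const L d \<alpha> \<mu> \<beta> \<kappa> G f g n"
  shows "lin_stable L d \<alpha> \<mu> \<beta> \<kappa> G f g"
proof -
  obtain \<omega> where "\<omega> > 0" "\<omega> \<le> kdecay \<mu> \<beta> g" and gap:
    "\<And>n. 0 < disp_trace L d \<mu> \<beta> f g n \<and> \<omega> \<le> disp_trace L d \<mu> \<beta> f g n / 2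
        \<and> \<omega> \<le> disp_const L d \<alpha> \<mu> \<beta> \<kappa> G f g n / disp_trace L d \<mu> \<beta> f g n"
    using disp_uniform_gap[OF assms(1) assms(3-)] by blast
  have "Re ev \<le> - \<omega>" if "lin_eigenvalue L d \<alpha> \<mu> \<beta> \<kappa> G f g ev" for ev
    using lin_eigenvalue_imp_dispersion[OF assms(1,2) that]
  proof
    assume "ev = - complex_of_real (kdecay \<mu> \<beta> g)"
    then show ?thesis using \<open>\<omega> \<le> kdecay \<mu> \<beta> g\<close> by simp
  next
    assume "\<exists>n. ev * ev + of_real (disp_trace L d \<mu> \<beta> f g n) * ev
        + of_real (disp_const L d \<alpha> \<mu> \<beta> \<kappa> G f g n) = 0"
    then obtain n where root: "ev * ev + of_real (disp_trace L d \<mu> \<beta> f g n) * ev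
        + of_real (disp_const L d \<alpha> \<mu> \<beta> \<kappa> G f g n) = 0" by blast
    note gap_n = gap[of n]
    then have "disp_const L d \<alpha> \<mu> \<beta> \<kappa> G f g n > 0"
      using \<open>\<omega> > 0\<close> by (smt (verit) divide_nonpos_pos)
    from Re_quadratic_root_le[OF _ this root] gap_n show ?thesis by linarith
  qed
  then show ?thesis unfolding lin_stable_def using \<open>\<omega> > 0\<close> by blast
qed

section \<open>The critical values of the chemotactic coefficient\<close>

lemma less_INF_imp_ratio_gap:
  fixes A :: "'a \<Rightarrow> real"
  assumes "0 < \<alpha>" "ereal \<alpha> < (INF n\<in>S. ereal (A n))"
  obtains \<delta> where "\<delta> > 0" "\<And>n. n \<in> S \<Longrightarrow> \<alpha> / A n \<le> 1 - \<delta>"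
proof -
  obtain r where "\<alpha> < r" and r: "ereal r < (INF n\<in>S. ereal (A n))"
    using ereal_dense2[OF assms(2)] by auto
  show thesis
  proof (rule that[of "1 - \<alpha> / r"])
    show "1 - \<alpha> / r > 0" using \<open>\<alpha> < r\<close> assms(1) by simp
    fix n assume "n \<in> S"
    then have "r < A n" using order.strict_trans2[OF r INF_lower[OF \<open>n \<in> S\<close>]] by simp
    then show "\<alpha> / A n \<le> 1 - (1 - \<alpha> / r)" using \<open>\<alpha> < r\<close> assms(1) by (simp add: divide_left_mono)
  qed
qed

lemma SUP_less_imp_ratio_gap:
  fixes A :: "'a \<Rightarrow> real"
  assumes "\<alpha> < 0" "(SUP n\<in>S. ereal (A n)) < ereal \<alpha>"
  obtains \<delta> where "\<delta> > 0" "\<And>n. n \<in> S \<Longrightarrow> \<alpha> / A n \<le> 1 - \<delta>"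
proof -
  have "ereal (- \<alpha>) < - (SUP n\<in>S. ereal (A n))"
    using assms(2) by (metis ereal_minus_less_minus uminus_ereal.simps(1))
  then have "ereal (- \<alpha>) < (INF n\<in>S. ereal (- A n))"
    using ereal_INF_uminus_eq[of "\<lambda>n. ereal (A n)" S] by simp
  then obtain \<delta> where "\<delta> > 0" "\<And>n. n \<in> S \<Longrightarrow> (- \<alpha>) / (- A n) \<le> 1 - \<delta>"
    using less_INF_imp_ratio_gap[where \<alpha> = "-\<alpha>" and A = "\<lambda>n. - A n" and S = S] assms(1) by auto
  then show thesis using that by simp
qed

text \<open>In the application \<open>E n + \<alpha> * C n\<close> is \<open>disp_const n / lam n\<close>, an affine function of \<open>\<alpha>\<close>
  with root \<open>A n\<close>; the sets \<open>Sp\<close>, \<open>Sm\<close> collect the modes with positive and negative root.\<close>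
lemma threshold_ratio_gap:
  fixes C A :: "nat \<Rightarrow> real"
  assumes sign: "\<And>n. n \<in> N \<Longrightarrow> C n \<noteq> 0 \<Longrightarrow> (A n > 0 \<longleftrightarrow> C n < 0) \<and> (A n < 0 \<longleftrightarrow> C n > 0)"
    and Sp: "\<And>n. n \<in> N \<Longrightarrow> C n \<noteq> 0 \<Longrightarrow> A n > 0 \<Longrightarrow> n \<in> Sp"
    and Sm: "\<And>n. n \<in> N \<Longrightarrow> C n \<noteq> 0 \<Longrightarrow> A n < 0 \<Longrightarrow> n \<in> Sm"
    and "(SUP n\<in>Sm. ereal (A n)) < ereal \<alpha>" "ereal \<alpha> < (INF n\<in>Sp. ereal (A n))"
  obtains \<delta> where "\<delta> > 0" "\<And>n. n \<in> N \<Longrightarrow> \<alpha> * C n < 0 \<Longrightarrow> \<alpha> / A n \<le> 1 - \<delta>"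
proof (cases "\<alpha> > 0")
  case True
  obtain \<delta> where "\<delta> > 0" "\<And>n. n \<in> Sp \<Longrightarrow> \<alpha> / A n \<le> 1 - \<delta>"
    using less_INF_imp_ratio_gap[OF True assms(5)] by blast
  with True Sp sign show thesis by (intro that[of \<delta>]) (auto simp: mult_less_0_iff)
next
  case False
  show thesis
  proof (cases "\<alpha> < 0")
    case True
    obtain \<delta> where "\<delta> > 0" "\<And>n. n \<in> Sm \<Longrightarrow> \<alpha> / A n \<le> 1 - \<delta>"
      using SUP_less_imp_ratio_gap[OF True assms(4)] by blast
    with True Sm sign show thesis by (intro that[of \<delta>]) (auto simp: mult_less_0_iff)
  qed (use False in \<open>intro that[of 1], auto\<close>)
qed

lemma threshold_gap:
  fixes E C A :: "nat \<Rightarrow> real"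
  assumes "lb > 0" and E: "\<And>n. n \<in> N \<Longrightarrow> lb \<le> E n"
    and A: "\<And>n. n \<in> N \<Longrightarrow> C n \<noteq> 0 \<Longrightarrow> A n = - E n / C n"
    and Sp: "\<And>n. n \<in> N \<Longrightarrow> C n \<noteq> 0 \<Longrightarrow> A n > 0 \<Longrightarrow> n \<in> Sp"
    and Sm: "\<And>n. n \<in> N \<Longrightarrow> C n \<noteq> 0 \<Longrightarrow> A n < 0 \<Longrightarrow> n \<in> Sm"
    and "(SUP n\<in>Sm. ereal (A n)) < ereal \<alpha>" "ereal \<alpha> < (INF n\<in>Sp. ereal (A n))"
  shows "\<exists>\<epsilon>>0. \<forall>n\<in>N. \<epsilon> \<le> E n + \<alpha> * C n"
proof -
  have sign: "(A n > 0 \<longleftrightarrow> C n < 0) \<and> (A n < 0 \<longleftrightarrow> C n > 0)" if "n \<in> N" "C n \<noteq> 0" for n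
    using A[OF that] E[OF that(1)] \<open>lb > 0\<close> that(2)
    by (auto simp: divide_less_0_iff zero_less_divide_iff)
  obtain \<delta> where "\<delta> > 0" and \<delta>: "\<And>n. n \<in> N \<Longrightarrow> \<alpha> * C n < 0 \<Longrightarrow> \<alpha> / A n \<le> 1 - \<delta>"
    using threshold_ratio_gap[OF sign Sp Sm assms(6,7)] by blast
  show ?thesis
  proof (intro exI[of _ "lb * min 1 \<delta>"] conjI ballI)
    show "lb * min 1 \<delta> > 0" using \<open>lb > 0\<close> \<open>\<delta> > 0\<close> by simp
    fix n assume "n \<in> N"
    show "lb * min 1 \<delta> \<le> E n + \<alpha> * C n"
    proof (cases "\<alpha> * C n < 0")
      case True
      then have "C n \<noteq> 0" by auto
      then have "A n \<noteq> 0" using sign[OF \<open>n \<in> N\<close>] by (cases "C n < 0") auto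
      moreover have "E n = - (A n * C n)"
        using A[OF \<open>n \<in> N\<close> \<open>C n \<noteq> 0\<close>] \<open>C n \<noteq> 0\<close> by (simp add: field_simps)
      ultimately have "E n + \<alpha> * C n = E n * (1 - \<alpha> / A n)" by (simp add: field_simps)
      moreover have "lb * min 1 \<delta> \<le> E n * (1 - \<alpha> / A n)"
        using E[OF \<open>n \<in> N\<close>] \<delta>[OF \<open>n \<in> N\<close> True] \<open>lb > 0\<close> \<open>\<delta> > 0\<close>
        by (intro mult_mono) auto
      ultimately show ?thesis by simp
    next
      case False
      have "lb * min 1 \<delta> \<le> lb" using \<open>lb > 0\<close> by (simp add: mult_left_le)
      then show ?thesis using E[OF \<open>n \<in> N\<close>] False by linarith
    qed
  qed
qed

lemma threshold_violation:
  fixes E C A :: "nat \<Rightarrow> real"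
  assumes E: "\<And>n. n \<in> N \<Longrightarrow> 0 < E n"
    and A: "\<And>n. n \<in> N \<Longrightarrow> C n \<noteq> 0 \<Longrightarrow> A n = - E n / C n"
    and Sp: "\<And>n. n \<in> Sp \<Longrightarrow> n \<in> N \<and> C n \<noteq> 0 \<and> A n > 0"
    and Sm: "\<And>n. n \<in> Sm \<Longrightarrow> n \<in> N \<and> C n \<noteq> 0 \<and> A n < 0"
    and "ereal \<alpha> < (SUP n\<in>Sm. ereal (A n)) \<or> (INF n\<in>Sp. ereal (A n)) < ereal \<alpha>"
  shows "\<exists>n\<in>N. E n + \<alpha> * C n < 0"
proof -
  obtain n where n: "n \<in> Sm \<and> \<alpha> < A n \<or> n \<in> Sp \<and> A n < \<alpha>"
    using assms(5) unfolding less_SUP_iff INF_less_iff by auto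
  then have "n \<in> N" "C n \<noteq> 0" "A n \<noteq> 0" using Sp[of n] Sm[of n] by auto
  moreover have "E n = - (A n * C n)"
    using A[OF \<open>n \<in> N\<close> \<open>C n \<noteq> 0\<close>] \<open>C n \<noteq> 0\<close> by (simp add: field_simps)
  ultimately have "E n + \<alpha> * C n = E n * (1 - \<alpha> / A n)" by (simp add: field_simps)
  moreover from n have "\<alpha> / A n > 1"
  proof
    assume "n \<in> Sm \<and> \<alpha> < A n"
    then show ?thesis using Sm[of n] by (auto simp: less_divide_eq)
  next
    assume "n \<in> Sp \<and> A n < \<alpha>"
    then show ?thesis using Sp[of n] by (auto simp: less_divide_eq)
  qed
  ultimately have "E n + \<alpha> * C n < 0" using E[OF \<open>n \<in> N\<close>] by (simp add: mult_pos_neg)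
  with \<open>n \<in> N\<close> show ?thesis by (rule rev_bexI)
qed

lemma kcoupling_mult_kdecay:
  assumes "g 1 = \<rho>" "kdecay \<mu> \<beta> g \<noteq> 0"
  shows "kcoupling \<mu> \<beta> \<kappa> g * kdecay \<mu> \<beta> g = \<kappa> * (deriv g 1 * (\<mu> + \<beta>) - \<beta> * \<rho>)"
proof -
  let ?b = "kdecay \<mu> \<beta> g" and ?k = "kstar (g 1) \<kappa> \<mu> \<beta>"
  have k: "?k * ?b = \<rho> * \<kappa>" using assms unfolding kstar_def kdecay_def by simp
  have "kcoupling \<mu> \<beta> \<kappa> g * ?b = deriv g 1 * (\<kappa> * ?b - ?k * ?b) - \<beta> * (?k * ?b)"
    unfolding kcoupling_def by (simp add: algebra_simps)
  also have "\<dots> = \<kappa> * (deriv g 1 * (\<mu> + \<beta>) - \<beta> * \<rho>)"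
    unfolding k unfolding kdecay_def assms(1) by (simp add: algebra_simps)
  finally show ?thesis .
qed

text \<open>For \<open>n \<ge> 1\<close>, \<open>disp_const n = lam n * (disp_base n + \<alpha> * disp_slope n)\<close> is affine in
  \<open>\<alpha>\<close>, and \<open>alpha_hat n\<close> is its root.\<close>
definition disp_base :: "real \<Rightarrow> real \<Rightarrow> real \<Rightarrow> real \<Rightarrow> (real \<Rightarrow> real) \<Rightarrow> (real \<Rightarrow> real)
    \<Rightarrow> nat \<Rightarrow> real" where
  "disp_base L d \<mu> \<beta> f g n = kdecay \<mu> \<beta> g * (d - deriv f 1 / lam L n)"

definition disp_slope :: "real \<Rightarrow> real \<Rightarrow> real \<Rightarrow> real \<Rightarrow> (real \<Rightarrow> real) \<Rightarrow> (real \<Rightarrow> real)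
    \<Rightarrow> nat \<Rightarrow> real" where
  "disp_slope L \<mu> \<beta> \<kappa> G g n = kcoupling \<mu> \<beta> \<kappa> g * Cn L G n"

lemma disp_const_eq:
  assumes "L \<noteq> 0" "n \<ge> 1"
  shows "disp_const L d \<alpha> \<mu> \<beta> \<kappa> G f g n
    = lam L n * (disp_base L d \<mu> \<beta> f g n + \<alpha> * disp_slope L \<mu> \<beta> \<kappa> G g n)"
  using lam_pos[OF assms] unfolding disp_const_def disp_base_def disp_slope_def
  by (simp add: field_simps)

lemma alpha_hat_eq:
  assumes "g 1 = \<rho>" "kdecay \<mu> \<beta> g \<noteq> 0"
  shows "alpha_hat L d \<mu> \<beta> \<kappa> \<rho> G f g n = - disp_base L d \<mu> \<beta> f g n / disp_slope L \<mu> \<beta> \<kappa> G g n"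
proof -
  have "\<rho> + \<mu> + \<beta> = kdecay \<mu> \<beta> g" unfolding kdecay_def using assms(1) by simp
  then show ?thesis
    unfolding alpha_hat_def disp_base_def disp_slope_def kcoupling_mult_kdecay[OF assms, symmetric]
    using assms(2) by (simp add: power2_eq_square)
qed

lemma disp_base_ge:
  assumes "L \<noteq> 0" "n \<ge> 1" "deriv f 1 < 0" "kdecay \<mu> \<beta> g > 0"
  shows "kdecay \<mu> \<beta> g * d \<le> disp_base L d \<mu> \<beta> f g n"
  using lam_pos[OF assms(1,2)] assms(3,4) unfolding disp_base_def
  by (simp add: divide_nonpos_pos less_imp_le mult_left_mono)

lemma disp_const_growth_if_between_thresholds:
  assumes "L > 0" "d > 0" "deriv f 1 < 0" "g 1 = \<rho>" "kdecay \<mu> \<beta> g > 0"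
    and "alpha_l L d \<mu> \<beta> \<kappa> \<rho> G f g < ereal \<alpha> \<and> ereal \<alpha> < alpha_r L d \<mu> \<beta> \<kappa> \<rho> G f g"
  obtains \<epsilon> where "\<epsilon> > 0" "\<And>n. n \<ge> 1 \<Longrightarrow> \<epsilon> * lam L n \<le> disp_const L d \<alpha> \<mu> \<beta> \<kappa> G f g n"
proof -
  define N where "N = {n::nat. n \<ge> 1}"
  have "\<exists>\<epsilon>>0. \<forall>n\<in>N. \<epsilon> \<le> disp_base L d \<mu> \<beta> f g n + \<alpha> * disp_slope L \<mu> \<beta> \<kappa> G g n"
  proof (rule threshold_gap[where A = "alpha_hat L d \<mu> \<beta> \<kappa> \<rho> G f g"
        and Sp = "Sigma_plus L d \<mu> \<beta> \<kappa> \<rho> G f g" and Sm = "Sigma_minus L d \<mu> \<beta> \<kappa> \<rho> G f g"])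
    show "kdecay \<mu> \<beta> g * d > 0" using assms(2,5) by simp
    show "kdecay \<mu> \<beta> g * d \<le> disp_base L d \<mu> \<beta> f g n" if "n \<in> N" for n
      using that assms(1,3,5) unfolding N_def by (intro disp_base_ge) auto
    show "alpha_hat L d \<mu> \<beta> \<kappa> \<rho> G f g n = - disp_base L d \<mu> \<beta> f g n / disp_slope L \<mu> \<beta> \<kappa> G g n" for n
      using assms(4,5) by (intro alpha_hat_eq) auto
  qed (use assms(6) in \<open>auto simp: N_def Sigma_plus_def Sigma_minus_def disp_slope_def
          alpha_l_def alpha_r_def\<close>)
  then obtain \<epsilon> where "\<epsilon> > 0"
    and \<epsilon>: "\<forall>n\<in>N. \<epsilon> \<le> disp_base L d \<mu> \<beta> f g n + \<alpha> * disp_slope L \<mu> \<beta> \<kappa> G g n" by auto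
  show thesis
  proof (rule that[OF \<open>\<epsilon> > 0\<close>])
    fix n :: nat assume "n \<ge> 1"
    have "disp_const L d \<alpha> \<mu> \<beta> \<kappa> G f g n
        = lam L n * (disp_base L d \<mu> \<beta> f g n + \<alpha> * disp_slope L \<mu> \<beta> \<kappa> G g n)"
      using assms(1) \<open>n \<ge> 1\<close> by (intro disp_const_eq) auto
    then show "\<epsilon> * lam L n \<le> disp_const L d \<alpha> \<mu> \<beta> \<kappa> G f g n"
      using \<epsilon> lam_pos[of L n] assms(1) \<open>n \<ge> 1\<close> unfolding N_def
      by (simp add: mult.commute mult_left_mono)
  qed
qed

lemma disp_const_neg_if_beyond_threshold:
  assumes "L > 0" "d > 0" "deriv f 1 < 0" "g 1 = \<rho>" "kdecay \<mu> \<beta> g > 0" "kcoupling \<mu> \<beta> \<kappa> g \<noteq> 0"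
    and "ereal \<alpha> < alpha_l L d \<mu> \<beta> \<kappa> \<rho> G f g \<or> alpha_r L d \<mu> \<beta> \<kappa> \<rho> G f g < ereal \<alpha>"
  obtains n where "disp_const L d \<alpha> \<mu> \<beta> \<kappa> G f g n < 0"
proof -
  define N where "N = {n::nat. n \<ge> 1}"
  have "\<exists>n\<in>N. disp_base L d \<mu> \<beta> f g n + \<alpha> * disp_slope L \<mu> \<beta> \<kappa> G g n < 0"
  proof (rule threshold_violation[where A = "alpha_hat L d \<mu> \<beta> \<kappa> \<rho> G f g"
        and Sp = "Sigma_plus L d \<mu> \<beta> \<kappa> \<rho> G f g" and Sm = "Sigma_minus L d \<mu> \<beta> \<kappa> \<rho> G f g"])
    show "0 < disp_base L d \<mu> \<beta> f g n" if "n \<in> N" for n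
      using order.strict_trans2[OF mult_pos_pos[OF assms(5,2)] disp_base_ge[OF _ _ assms(3,5)]]
        that assms(1) unfolding N_def by auto
    show "alpha_hat L d \<mu> \<beta> \<kappa> \<rho> G f g n = - disp_base L d \<mu> \<beta> f g n / disp_slope L \<mu> \<beta> \<kappa> G g n" for n
      using assms(4,5) by (intro alpha_hat_eq) auto
  qed (use assms(6,7) in \<open>auto simp: N_def Sigma_plus_def Sigma_minus_def disp_slope_def
          alpha_l_def alpha_r_def\<close>)
  then obtain n where "n \<ge> 1"
    and "disp_base L d \<mu> \<beta> f g n + \<alpha> * disp_slope L \<mu> \<beta> \<kappa> G g n < 0"
    unfolding N_def by auto
  moreover have "disp_const L d \<alpha> \<mu> \<beta> \<kappa> G f g n
      = lam L n * (disp_base L d \<mu> \<beta> f g n + \<alpha> * disp_slope L \<mu> \<beta> \<kappa> G g n)"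
    using assms(1) \<open>n \<ge> 1\<close> by (intro disp_const_eq) auto
  ultimately have "disp_const L d \<alpha> \<mu> \<beta> \<kappa> G f g n < 0"
    using lam_pos[of L n] assms(1) by (simp add: mult_pos_neg)
  then show thesis by (rule that)
qed

theorem theorem1p4:
  fixes L d \<alpha> \<mu> \<beta> \<kappa> \<rho> :: real and G f g :: "real \<Rightarrow> real"
  assumes "L > 0" and "d > 0" and "\<mu> \<ge> 0" and "\<beta> \<ge> 0" and "\<kappa> > 0"
    and "H0 L G" and "H1 f" and "H2 g \<rho>"
    and "deriv g 1 * (\<mu> + \<beta>) - \<beta> * \<rho> \<noteq> 0"
  shows "(alpha_l L d \<mu> \<beta> \<kappa> \<rho> G f g < ereal \<alpha> \<and> ereal \<alpha> < alpha_r L d \<mu> \<beta> \<kappa> \<rho> G f g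
            \<longrightarrow> lin_stable L d \<alpha> \<mu> \<beta> \<kappa> G f g)
       \<and> (ereal \<alpha> < alpha_l L d \<mu> \<beta> \<kappa> \<rho> G f g \<or> ereal \<alpha> > alpha_r L d \<mu> \<beta> \<kappa> \<rho> G f g
            \<longrightarrow> lin_unstable L d \<alpha> \<mu> \<beta> \<kappa> G f g)"
proof -
  have "g 1 = \<rho>" "\<rho> > 0" "deriv f 1 < 0" using assms(7,8) unfolding H1_def H2_def by auto
  then have b: "kdecay \<mu> \<beta> g > 0" unfolding kdecay_def using assms(3,4) by simp
  show ?thesis
  proof (intro conjI impI)
    assume "alpha_l L d \<mu> \<beta> \<kappa> \<rho> G f g < ereal \<alpha> \<and> ereal \<alpha> < alpha_r L d \<mu> \<beta> \<kappa> \<rho> G f g"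
    from disp_const_growth_if_between_thresholds[OF assms(1,2) \<open>deriv f 1 < 0\<close> \<open>g 1 = \<rho>\<close> b this]
    obtain \<epsilon> where "\<epsilon> > 0"
      and "\<And>n. n \<ge> 1 \<Longrightarrow> \<epsilon> * lam L n \<le> disp_const L d \<alpha> \<mu> \<beta> \<kappa> G f g n"
      by metis
    with assms(1,6,2) \<open>deriv f 1 < 0\<close> b show "lin_stable L d \<alpha> \<mu> \<beta> \<kappa> G f g"
      by (rule lin_stable_if_disp_const_growth)
  next
    assume "ereal \<alpha> < alpha_l L d \<mu> \<beta> \<kappa> \<rho> G f g \<or> alpha_r L d \<mu> \<beta> \<kappa> \<rho> G f g < ereal \<alpha>"
    moreover have "kcoupling \<mu> \<beta> \<kappa> g \<noteq> 0"
      using kcoupling_mult_kdecay[of g \<rho> \<mu> \<beta> \<kappa>] \<open>g 1 = \<rho>\<close> b assms(5,9) by auto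
    ultimately obtain n where "disp_const L d \<alpha> \<mu> \<beta> \<kappa> G f g n < 0"
      using disp_const_neg_if_beyond_threshold[OF assms(1,2) \<open>deriv f 1 < 0\<close> \<open>g 1 = \<rho>\<close> b] by metis
    with assms(1,6) b show "lin_unstable L d \<alpha> \<mu> \<beta> \<kappa> G f g"
      by (rule lin_unstable_if_disp_const_neg)
  qed
qed

end
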